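(* Assume $n$ is odd. For $i\in I_0$ and a positive integer $q$, the linear map $\Theta_i^{(q)}:H_{\bar0}\to W_{\bar1}$, $D_H(f)\mapsto x^\omega\,(\mathrm{ad}\,\partial_i)^{p^q}(D_H(f))$, where $\mathrm{ad}\,\partial_i(E)=[\partial_i,E]$, is a derivation from $H_{\bar0}$ into $W_{\bar1}$ (i.e. $\Theta_i^{(q)}([x,y])=[\Theta_i^{(q)}(x),y]+[x,\Theta_i^{(q)}(y)]$ for $x,y\in H_{\bar0}$), and it is $\mathbb Z$-homogeneous of degree $n-p^q$.
   Context: Let $\mathbb F$ be an algebraically closed field of characteristic $p>3$. Fix positive integers $m=2r$ and $n$; write $n=2s$ if $n$ is even and $n=2s+1$ if $n$ is odd. Put $I_0=\{1,\dots,m\}$, $I_1=\{m+1,\dots,m+n\}$, $I=I_0\cup I_1$. Fix positive integers $t_1,\dots,t_m$, put $\pi=(\pi_1,\dots,\pi_m)$ with $\pi_i=p^{t_i}-1$, and $\mathbb A=\{\alpha\in\mathbb N_0^m:\alpha_i\le\pi_i\ \forall i\}$; $\varepsilon_i$ is the $i$-th unit vector and $|\alpha|=\sum\alpha_i$. Let $\mathbb B$ be the set of strictly increasing sequences $u=\langle i_1<\dots<i_k\rangle$ of elements of $I_1$ (including $\emptyset$), $|u|=k$, $\mathbb B^0=\{u\in\mathbb B:|u|\text{ even}\}$, $\omega=\langle m+1,\dots,m+n\rangle$. Let $\mathcal O=\mathcal O(m,n;\underline t)$ be the supercommutative associative superalgebra with basis $x^{(\alpha)}x^u$ ($\alpha\in\mathbb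 A,u\in\mathbb B$), where $x^{(\alpha)}x^{(\beta)}=\binom{\alpha+\beta}{\alpha}x^{(\alpha+\beta)}$, $x^{(\alpha)}$ even, $x_{m+1},\dots,x_{m+n}$ odd and pairwise anticommuting, $x^u=x_{i_1}\cdots x_{i_k}$, $x^\emptyset=1$, $x_i:=x^{(\varepsilon_i)}$ for $i\in I_0$, $\mathbb Z$-graded by $\mathrm{zd}(x^{(\alpha)}x^u)=|\alpha|+|u|$. For $i\in I$ let $\partial_i$ be the superderivation of $\mathcal O$ with $\partial_i(x^{(\alpha)})=x^{(\alpha-\varepsilon_i)}$ for $i\in I_0$ and $\partial_i(x_k)=\delta_{ik}$ for $i\in I_1$; parity $\mu(i)=\bar0$ for $i\in I_0$, $\mu(i)=\bar1$ for $i\in I_1$. $W=\{\sum_{i\in I}f_i\partial_i: f_i\in\mathcal O\}$ is the Lie superalgebra with bracket $[f\partial_i,g\partial_j]=f\partial_i(g)\partial_j-(-1)^{p(f\partial_i)p(g\partial_j)}g\partial_j(f)\partial_i$, $\mathbb Z$-graded by $\mathrm{zd}(f\partial_j)=\mathrm{zd}(f)-1$, with even and odd parts $W_{\bar 0},W_{\bar1}$; for $h\in\mathcal O$ and $E=\sum f_j\partial_j\in W$, $hE=\sum hf_j\partial_j$. Define $i'=i+r$ ($1\le i\le r$), $i'=i-r$ ($r<i\le m$), $i'=i+s$ ($m<i\le m+s$), $i'=i-s$ ($m+s<i\le m+2s$), $i'=i$ otherwise; $\tau(i)=1$ for $1\le i\le r$, $\tau(i)=-1$ for $r<i\le m$,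 $\tau(i)=1$ for $i\in I_1$. For $f\in\mathcal O$ put $D_H(f)=\sum_{i\in I}\tau(i)(-1)^{\mu(i)p(f)}\partial_i(f)\partial_{i'}$. Let $H_{\bar0}=\mathrm{span}_{\mathbb F}\{D_H(x^{(\alpha)}x^u):\alpha\in\mathbb A,u\in\mathbb B^0,(\alpha,u)\ne(\pi,\omega)\}$, a $\mathbb Z$-graded subalgebra of $W_{\bar0}$ with $\mathrm{zd}(D_H(f))=\mathrm{zd}(f)-2$. A linear map between $\mathbb Z$-graded spaces is $\mathbb Z$-homogeneous of degree $d$ if it maps degree $k$ into degree $k+d$ for all $k$. *)

theory Defs
  imports "HOL-Computational_Algebra.Polynomial"
begin

(* Basis index of O(m,n;t): a pair (alpha, u) with alpha a multi-index supported on {1..m}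
   and u a subset of I_1 = {m+1..m+n} (an increasing sequence is identified with its set). *)
type_synonym idx = "(nat \<Rightarrow> nat) \<times> nat set"
(* An element of O = coefficient function on basis indices (zero off the basis). *)
type_synonym 'a sO = "idx \<Rightarrow> 'a"
(* An element of W = family of coefficients f_j of \<partial>_j (zero for j outside I). *)
type_synonym 'a sW = "nat \<Rightarrow> 'a sO"

definition Aset :: "nat \<Rightarrow> (nat \<Rightarrow> nat) \<Rightarrow> nat \<Rightarrow> (nat \<Rightarrow> nat) set" where
  "Aset m t p = {\<alpha>. (\<forall>k. k \<notin> {1..m} \<longrightarrow> \<alpha> k = 0) \<and> (\<forall>k\<in>{1..m}. \<alpha> k \<le> p ^ t k - 1)}"

definition Bas :: "nat \<Rightarrow> nat \<Rightarrow> (nat \<Rightarrow> nat) \<Rightarrow> nat \<Rightarrow> idx set" where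
  "Bas m n t p = Aset m t p \<times> Pow {m+1..m+n}"

definition piv :: "nat \<Rightarrow> (nat \<Rightarrow> nat) \<Rightarrow> nat \<Rightarrow> nat \<Rightarrow> nat" where
  "piv m t p = (\<lambda>k. if k \<in> {1..m} then p ^ t k - 1 else 0)"

definition omega :: "nat \<Rightarrow> nat \<Rightarrow> nat set" where
  "omega m n = {m+1..m+n}"

(* x^u x^v = sign_uv u v * x^(u \<union> v) for disjoint u, v *)
definition sign_uv :: "nat set \<Rightarrow> nat set \<Rightarrow> 'a::field" where
  "sign_uv u v = (if even (card {(a,b). a \<in> u \<and> b \<in> v \<and> b < a}) then 1 else -1)"

definition omul :: "nat \<Rightarrow> nat \<Rightarrow> (nat \<Rightarrow> nat) \<Rightarrow> nat \<Rightarrow> 'a::field sO \<Rightarrow> 'a sO \<Rightarrow> 'a sO" where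
  "omul m n t p f g = (\<lambda>(\<gamma>, w). if (\<gamma>, w) \<in> Bas m n t p then
      (\<Sum>(\<alpha>, u)\<in>Bas m n t p. \<Sum>(\<beta>, v)\<in>Bas m n t p.
         if (\<lambda>k. \<alpha> k + \<beta> k) = \<gamma> \<and> u \<inter> v = {} \<and> u \<union> v = w
         then (\<Prod>k\<in>{1..m}. of_nat ((\<alpha> k + \<beta> k) choose \<alpha> k)) * sign_uv u v * f (\<alpha>, u) * g (\<beta>, v)
         else 0)
     else 0)"

definition oderiv :: "nat \<Rightarrow> nat \<Rightarrow> (nat \<Rightarrow> nat) \<Rightarrow> nat \<Rightarrow> nat \<Rightarrow> 'a::field sO \<Rightarrow> 'a sO" where
  "oderiv m n t p i f = (\<lambda>(\<beta>, v).
     if (\<beta>, v) \<notin> Bas m n t p then 0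
     else if i \<in> {1..m} then
       (if \<beta>(i := \<beta> i + 1) \<in> Aset m t p then f (\<beta>(i := \<beta> i + 1), v) else 0)
     else if i \<in> {m+1..m+n} then
       (if i \<notin> v then (-1) ^ card {k \<in> v. k < i} * f (\<beta>, insert i v) else 0)
     else 0)"

(* parity-b part of an element of O (b = True: odd) *)
definition opart :: "'a::field sO \<Rightarrow> bool \<Rightarrow> 'a sO" where
  "opart f b = (\<lambda>(\<alpha>, u). if odd (card u) = b then f (\<alpha>, u) else 0)"

(* parity-b part of an element of W; parity of f \<partial>_j is p(f) + \<mu>(j), \<mu>(j) odd iff j > m *)
definition Wpart :: "nat \<Rightarrow> 'a::field sW \<Rightarrow> bool \<Rightarrow> 'a sW" where
  "Wpart m D b = (\<lambda>j. opart (D j) (b \<noteq> (m < j)))"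

definition Wapp :: "nat \<Rightarrow> nat \<Rightarrow> (nat \<Rightarrow> nat) \<Rightarrow> nat \<Rightarrow> 'a::field sW \<Rightarrow> 'a sO \<Rightarrow> 'a sO" where
  "Wapp m n t p D h = (\<lambda>x. \<Sum>j\<in>{1..m+n}. omul m n t p (D j) (oderiv m n t p j h) x)"

definition brh :: "nat \<Rightarrow> nat \<Rightarrow> (nat \<Rightarrow> nat) \<Rightarrow> nat \<Rightarrow> bool \<Rightarrow> bool \<Rightarrow> 'a::field sW \<Rightarrow> 'a sW \<Rightarrow> 'a sW" where
  "brh m n t p a b D E = (\<lambda>j x. Wapp m n t p D (E j) x
        - (if a \<and> b then -1 else 1) * Wapp m n t p E (D j) x)"

(* the Lie superbracket of W, extended bilinearly *)
definition Wbr :: "nat \<Rightarrow> nat \<Rightarrow> (nat \<Rightarrow> nat) \<Rightarrow> nat \<Rightarrow> 'a::field sW \<Rightarrow> 'a sW \<Rightarrow> 'a sW" where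
  "Wbr m n t p D E = (\<lambda>j x. \<Sum>a\<in>UNIV. \<Sum>b\<in>UNIV.
        brh m n t p a b (Wpart m D a) (Wpart m E b) j x)"

definition Wadd :: "'a::field sW \<Rightarrow> 'a sW \<Rightarrow> 'a sW" where
  "Wadd D E = (\<lambda>j x. D j x + E j x)"

definition prm :: "nat \<Rightarrow> nat \<Rightarrow> nat \<Rightarrow> nat" where
  "prm m n i = (let r = m div 2; s = n div 2 in
     if 1 \<le> i \<and> i \<le> r then i + r
     else if r < i \<and> i \<le> m then i - r
     else if m < i \<and> i \<le> m + s then i + s
     else if m + s < i \<and> i \<le> m + 2 * s then i - s
     else i)"

definition tau :: "nat \<Rightarrow> nat \<Rightarrow> 'a::field" where
  "tau m i = (if m div 2 < i \<and> i \<le> m then -1 else 1)"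

(* D_H, extended linearly over the parity decomposition of f;
   coefficient of \<partial>_j comes from the index i with i' = j, i.e. i = j' *)
definition DH :: "nat \<Rightarrow> nat \<Rightarrow> (nat \<Rightarrow> nat) \<Rightarrow> nat \<Rightarrow> 'a::field sO \<Rightarrow> 'a sW" where
  "DH m n t p f = (\<lambda>j x. if j \<in> {1..m+n} then
      (let i = prm m n j in \<Sum>b\<in>UNIV.
         tau m i * (if b \<and> m < i then -1 else 1) * oderiv m n t p i (opart f b) x)
     else 0)"

definition bas :: "idx \<Rightarrow> 'a::field sO" where
  "bas y0 = (\<lambda>y. if y = y0 then 1 else 0)"

definition HB :: "nat \<Rightarrow> nat \<Rightarrow> (nat \<Rightarrow> nat) \<Rightarrow> nat \<Rightarrow> idx set" where
  "HB m n t p = {(\<alpha>, u) \<in> Bas m n t p. even (card u) \<and> (\<alpha>, u) \<noteq> (piv m t p, omega m n)}"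

definition H0 :: "nat \<Rightarrow> nat \<Rightarrow> (nat \<Rightarrow> nat) \<Rightarrow> nat \<Rightarrow> 'a::field sW set" where
  "H0 m n t p = {D. \<exists>c :: idx \<Rightarrow> 'a.
      D = (\<lambda>j x. \<Sum>y\<in>HB m n t p. c y * DH m n t p (bas y) j x)}"

definition Wset :: "nat \<Rightarrow> nat \<Rightarrow> (nat \<Rightarrow> nat) \<Rightarrow> nat \<Rightarrow> 'a::field sW set" where
  "Wset m n t p = {D. (\<forall>j. j \<notin> {1..m+n} \<longrightarrow> D j = (\<lambda>_. 0))
                    \<and> (\<forall>j x. x \<notin> Bas m n t p \<longrightarrow> D j x = 0)}"

definition W1 :: "nat \<Rightarrow> nat \<Rightarrow> (nat \<Rightarrow> nat) \<Rightarrow> nat \<Rightarrow> 'a::field sW set" where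
  "W1 m n t p = {D \<in> Wset m n t p. Wpart m D True = D}"

definition zdeg :: "nat \<Rightarrow> idx \<Rightarrow> nat" where
  "zdeg m y = (\<Sum>k\<in>{1..m}. fst y k) + card (snd y)"

(* D lies in the degree-k component W_k (zd(f \<partial>_j) = zd(f) - 1) *)
definition Whom :: "nat \<Rightarrow> int \<Rightarrow> 'a::field sW \<Rightarrow> bool" where
  "Whom m k D = (\<forall>j x. D j x \<noteq> 0 \<longrightarrow> int (zdeg m x) - 1 = k)"

definition dW :: "nat \<Rightarrow> 'a::field sW" where
  "dW i = (\<lambda>j. if j = i then bas (\<lambda>_. 0, {}) else (\<lambda>_. 0))"

definition Theta :: "nat \<Rightarrow> nat \<Rightarrow> (nat \<Rightarrow> nat) \<Rightarrow> nat \<Rightarrow> nat \<Rightarrow> nat \<Rightarrow> 'a::field sW \<Rightarrow> 'a sW" where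
  "Theta m n t p i q D = (\<lambda>j. omul m n t p (bas (\<lambda>_. 0, omega m n))
       ((((\<lambda>E. Wbr m n t p (dW i) E) ^^ (p ^ q)) D) j))"

end

theory Submission
  imports Defs
begin

text \<open>
  As \<open>n\<close> is odd, \<open>x\<^sup>\<omega>\<close> is odd and contains every odd variable, so multiplying by it kills
  everything except the part of \<open>(ad \<partial>\<^sub>i)\<^sup>p\<^sup>\<^sup>q D = \<partial>\<^sub>i\<^sup>p\<^sup>\<^sup>q D\<close> free of odd variables:
  \<open>\<Theta>(D) = x\<^sup>\<omega> \<Sum>\<^sub>j \<partial>\<^sub>i\<^sup>p\<^sup>\<^sup>q(D\<^sub>j|\<^sub>u\<^sub>=\<^sub>\<emptyset>) \<partial>\<^sub>j\<close>, and the restriction \<open>D\<^sub>j|\<^sub>u\<^sub>=\<^sub>\<emptyset>\<close> vanishes for odd \<open>j\<close>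
  when \<open>D \<in> H\<^sub>0\<close>. On the truncated divided powers \<open>\<partial>\<^sub>i\<^sup>p\<^sup>\<^sup>q\<close> is a derivation, because
  \<open>(c + p\<^sup>q choose a) \<equiv> (c choose a) + (c choose a - p\<^sup>q)\<close> mod \<open>p\<close> and, by Kummer, products
  leaving the truncation vanish; commuting with the \<open>\<partial>\<^sub>k\<close>, it is then a derivation of the
  bracket of \<open>W(m;\<underline>t)\<close> on the even parts. In the brackets \<open>[\<Theta>(x), y]\<close> and \<open>[x, \<Theta>(y)]\<close> the
  odd components of \<open>y\<close> resp. \<open>x\<close> contribute only through \<open>\<Sum>\<^sub>k\<^sub>\<in>\<^sub>I\<^sub>\<^sub>1 \<partial>\<^sub>k y\<^sub>k\<close>, which has no
  odd-variable-free part for elements of \<open>H\<^sub>0\<close>: the summands for \<open>k\<close> and \<open>k'\<close> cancel.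
  Finally \<open>\<partial>\<^sub>i\<^sup>p\<^sup>\<^sup>q\<close> lowers the degree by \<open>p\<^sup>q\<close> and \<open>x\<^sup>\<omega>\<close> raises it by \<open>n\<close>.
\<close>

section \<open>Binomial coefficients in characteristic \<open>p\<close>\<close>

lemma prime_dvd_prime_power_choose:
  fixes p :: nat
  assumes "prime p" "0 < k" "k < p ^ e"
  shows "p dvd (p ^ e choose k)"
proof (rule ccontr)
  assume nd: "\<not> p dvd (p ^ e choose k)"
  have "k * (p ^ e choose k) = p ^ e * ((p ^ e - 1) choose (k - 1))"
    using times_binomial_minus1_eq[OF assms(2)] by simp
  hence "p ^ e dvd k * (p ^ e choose k)" by simp
  moreover have "coprime (p ^ e) (p ^ e choose k)"
    using nd assms(1) by (simp add: prime_imp_coprime coprime_commute)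
  ultimately have "p ^ e dvd k" using coprime_dvd_mult_left_iff by blast
  thus False using dvd_imp_le[of "p ^ e" k] assms(2,3) by linarith
qed

lemma of_nat_choose_add_prime_power:
  assumes ch: "CHAR('a::semiring_1) = p" and pr: "prime p"
  shows "(of_nat ((c + p ^ e) choose a) :: 'a)
       = of_nat (c choose a) + (if p ^ e \<le> a then of_nat (c choose (a - p ^ e)) else 0)"
proof -
  let ?N = "p ^ e"
  let ?f = "\<lambda>k. (of_nat ((?N choose k) * (c choose (a - k))) :: 'a)"
  let ?K = "{0} \<union> (if ?N \<le> a then {?N} else {})"
  have "(c + ?N) choose a = (\<Sum>k\<le>a. (?N choose k) * (c choose (a - k)))"
    by (simp add: vandermonde add.commute)
  hence "(of_nat ((c + ?N) choose a) :: 'a) = (\<Sum>k\<le>a. ?f k)"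
    by (simp only: of_nat_sum)
  also have "\<dots> = (\<Sum>k\<in>?K. ?f k)"
  proof (rule sum.mono_neutral_right)
    show "\<forall>k\<in>{..a} - ?K. ?f k = 0"
    proof
      fix k assume k: "k \<in> {..a} - ?K"
      show "?f k = 0"
      proof (cases "k < ?N")
        case True
        with k have "p dvd (?N choose k)" using prime_dvd_prime_power_choose[OF pr] by auto
        thus ?thesis using ch by (simp only: of_nat_eq_0_iff_char_dvd) simp
      next
        case False
        with k have "k > ?N" by (auto split: if_splits)
        thus ?thesis by (simp add: binomial_eq_0)
      qed
    qed
  qed auto
  also have "\<dots> = of_nat (c choose a) + (if ?N \<le> a then of_nat (c choose (a - ?N)) else 0)"
    using pr by (cases "?N \<le> a") (auto simp: prime_gt_0_nat add.commute)
  finally show ?thesis .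
qed

text \<open>Kummer: a carry in base \<open>p\<close> kills the binomial coefficient.\<close>

lemma of_nat_choose_carry_eq_0:
  assumes ch: "CHAR('a::semiring_1) = p" and pr: "prime p"
    and "a < p ^ e" "b < p ^ e" "p ^ e \<le> a + b"
  shows "(of_nat ((a + b) choose a) :: 'a) = 0"
proof -
  have "a + b = (a + b - p ^ e) + p ^ e" using assms by simp
  hence "(of_nat ((a + b) choose a) :: 'a) = of_nat ((a + b - p ^ e) choose a)
      + (if p ^ e \<le> a then of_nat ((a + b - p ^ e) choose (a - p ^ e)) else 0)"
    using of_nat_choose_add_prime_power[OF ch pr, of "a + b - p ^ e" e a] by simp
  also have "\<dots> = 0" using assms by (simp add: binomial_eq_0)
  finally show ?thesis .
qed

section \<open>Truncated divided powers\<close>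

definition restrict_Aset ::
    "nat \<Rightarrow> (nat \<Rightarrow> nat) \<Rightarrow> nat \<Rightarrow> ((nat \<Rightarrow> nat) \<Rightarrow> 'a::zero) \<Rightarrow> (nat \<Rightarrow> nat) \<Rightarrow> 'a" where
  "restrict_Aset m t p F \<alpha> = (if \<alpha> \<in> Aset m t p then F \<alpha> else 0)"

definition shift_at :: "nat \<Rightarrow> nat \<Rightarrow> ((nat \<Rightarrow> nat) \<Rightarrow> 'a) \<Rightarrow> (nat \<Rightarrow> nat) \<Rightarrow> 'a" where
  "shift_at i N F \<beta> = F (\<beta>(i := \<beta> i + N))"

text \<open>On coefficient functions of divided powers, \<open>dp_shift m t p i N\<close> is \<open>\<partial>\<^sub>i\<^sup>N\<close>.\<close>

definition dp_shift :: "nat \<Rightarrow> (nat \<Rightarrow> nat) \<Rightarrow> nat \<Rightarrow> nat \<Rightarrow> nat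
    \<Rightarrow> ((nat \<Rightarrow> nat) \<Rightarrow> 'a::zero) \<Rightarrow> (nat \<Rightarrow> nat) \<Rightarrow> 'a" where
  "dp_shift m t p i N F = restrict_Aset m t p (shift_at i N (restrict_Aset m t p F))"

text \<open>Product of divided powers \<open>x\<^sup>(\<^sup>\<alpha>\<^sup>)x\<^sup>(\<^sup>\<beta>\<^sup>) = (\<alpha>+\<beta> choose \<alpha>) x\<^sup>(\<^sup>\<alpha>\<^sup>+\<^sup>\<beta>\<^sup>)\<close>, without and with
  truncation to \<open>Aset\<close>.\<close>

definition dp_conv :: "nat set \<Rightarrow> ((nat \<Rightarrow> nat) \<Rightarrow> 'a) \<Rightarrow> ((nat \<Rightarrow> nat) \<Rightarrow> 'a)
    \<Rightarrow> (nat \<Rightarrow> nat) \<Rightarrow> 'a::comm_semiring_1" where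
  "dp_conv K F G \<gamma> = (\<Sum>\<alpha>\<in>{..\<gamma>}. (\<Prod>k\<in>K. of_nat (\<gamma> k choose \<alpha> k)) * F \<alpha> * G (\<gamma> - \<alpha>))"

definition dp_mult :: "nat \<Rightarrow> (nat \<Rightarrow> nat) \<Rightarrow> nat \<Rightarrow> ((nat \<Rightarrow> nat) \<Rightarrow> 'a::field)
    \<Rightarrow> ((nat \<Rightarrow> nat) \<Rightarrow> 'a) \<Rightarrow> (nat \<Rightarrow> nat) \<Rightarrow> 'a" where
  "dp_mult m t p F G \<gamma> = (if \<gamma> \<in> Aset m t p then
      (\<Sum>\<alpha>\<in>Aset m t p. \<Sum>\<beta>\<in>Aset m t p.
         if (\<lambda>k. \<alpha> k + \<beta> k) = \<gamma>
         then (\<Prod>k\<in>{1..m}. of_nat ((\<alpha> k + \<beta> k) choose \<alpha> k)) * F \<alpha> * G \<beta>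
         else 0) else 0)"

lemma finite_atMost_fun:
  assumes "finite K" and "\<forall>k. k \<notin> K \<longrightarrow> \<gamma> k = 0"
  shows "finite {..\<gamma> :: nat \<Rightarrow> nat}"
proof (rule finite_subset)
  let ?B = "\<Union>k\<in>K. {0..\<gamma> k}"
  show "{..\<gamma>} \<subseteq> {f. \<forall>x. (x \<in> K \<longrightarrow> f x \<in> ?B) \<and> (x \<notin> K \<longrightarrow> f x = 0)}"
  proof
    fix f assume f: "f \<in> {..\<gamma>}"
    have le: "f x \<le> \<gamma> x" for x using f by (simp add: le_fun_def)
    show "f \<in> {f. \<forall>x. (x \<in> K \<longrightarrow> f x \<in> ?B) \<and> (x \<notin> K \<longrightarrow> f x = 0)}"
    proof (intro CollectI allI conjI impI)
      fix x assume "x \<in> K" thus "f x \<in> ?B" using le[of x] by auto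
    next
      fix x assume "x \<notin> K" thus "f x = 0" using le[of x] assms(2) by simp
    qed
  qed
  show "finite {f. \<forall>x. (x \<in> K \<longrightarrow> f x \<in> ?B) \<and> (x \<notin> K \<longrightarrow> f x = (0::nat))}"
    by (rule finite_set_of_finite_funs) (use assms(1) in auto)
qed

lemma Aset_eq_atMost: "Aset m t p = {..piv m t p}"
proof -
  have "\<alpha> k \<le> piv m t p k \<longleftrightarrow> (k \<notin> {1..m} \<longrightarrow> \<alpha> k = 0) \<and> (k \<in> {1..m} \<longrightarrow> \<alpha> k \<le> p ^ t k - 1)"
    for \<alpha> k by (auto simp: piv_def)
  thus ?thesis by (auto simp: Aset_def le_fun_def)
qed

lemma finite_Aset: "finite (Aset m t p)"
  unfolding Aset_eq_atMost by (rule finite_atMost_fun[of "{1..m}"]) (auto simp: piv_def)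

lemma Aset_downward_closed: "\<gamma> \<in> Aset m t p \<Longrightarrow> \<alpha> \<le> \<gamma> \<Longrightarrow> \<alpha> \<in> Aset m t p"
  by (auto simp: Aset_eq_atMost)

lemma dp_mult_outside_Aset: "\<gamma> \<notin> Aset m t p \<Longrightarrow> dp_mult m t p F G \<gamma> = 0"
  by (simp add: dp_mult_def)

lemma dp_mult_eq_dp_conv:
  assumes \<gamma>: "\<gamma> \<in> Aset m t p"
  shows "dp_mult m t p F G \<gamma> = dp_conv {1..m} F G \<gamma>"
proof -
  let ?A = "Aset m t p"
  let ?T = "\<lambda>\<alpha>. (\<Prod>k\<in>{1..m}. of_nat (\<gamma> k choose \<alpha> k)) * F \<alpha> * G (\<gamma> - \<alpha>)"
  have inner: "(\<Sum>\<beta>\<in>?A. if (\<lambda>k. \<alpha> k + \<beta> k) = \<gamma>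
         then (\<Prod>k\<in>{1..m}. of_nat ((\<alpha> k + \<beta> k) choose \<alpha> k)) * F \<alpha> * G \<beta> else 0)
      = (if \<alpha> \<le> \<gamma> then ?T \<alpha> else 0)" for \<alpha>
  proof (cases "\<alpha> \<le> \<gamma>")
    case True
    have "\<alpha> k + \<beta> k = \<gamma> k \<longleftrightarrow> \<beta> k = \<gamma> k - \<alpha> k" for \<beta> k
      using True[unfolded le_fun_def, rule_format, of k] by auto
    hence "(\<lambda>k. \<alpha> k + \<beta> k) = \<gamma> \<longleftrightarrow> \<beta> = \<gamma> - \<alpha>" for \<beta>
      by (simp add: fun_eq_iff)
    moreover have "\<gamma> - \<alpha> \<in> ?A" by (rule Aset_downward_closed[OF \<gamma>]) (simp add: le_fun_def)
    ultimately show ?thesis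
      using True finite_Aset by (simp add: sum.delta' le_fun_def cong: if_cong)
  next
    case False
    hence "(\<lambda>k. \<alpha> k + \<beta> k) \<noteq> \<gamma>" for \<beta> by (auto simp: le_fun_def)
    thus ?thesis using False by simp
  qed
  have "dp_mult m t p F G \<gamma> = (\<Sum>\<alpha>\<in>?A. if \<alpha> \<le> \<gamma> then ?T \<alpha> else 0)"
    using \<gamma> by (simp add: dp_mult_def inner)
  also have "\<dots> = (\<Sum>\<alpha>\<in>?A \<inter> {..\<gamma>}. ?T \<alpha>)"
    by (simp only: sum.inter_restrict[OF finite_Aset] atMost_iff)
  also have "?A \<inter> {..\<gamma>} = {..\<gamma>}" using Aset_downward_closed[OF \<gamma>] by auto
  finally show ?thesis by (simp add: dp_conv_def fun_diff_def)
qed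

lemma dp_conv_cong:
  assumes "\<And>\<alpha>. \<alpha> \<le> \<gamma> \<Longrightarrow> F \<alpha> = F' \<alpha>" and "\<And>\<alpha>. \<alpha> \<le> \<gamma> \<Longrightarrow> G \<alpha> = G' \<alpha>"
  shows "dp_conv K F G \<gamma> = dp_conv K F' G' \<gamma>"
proof -
  have "\<gamma> - \<alpha> \<le> \<gamma>" for \<alpha> :: "nat \<Rightarrow> nat" by (simp add: le_fun_def)
  thus ?thesis using assms unfolding dp_conv_def by (intro sum.cong) auto
qed

lemma dp_conv_restrict_Aset_outside:
  fixes F G :: "(nat \<Rightarrow> nat) \<Rightarrow> 'a::comm_semiring_1"
  assumes ch: "CHAR('a) = p" and pr: "prime p" and \<gamma>: "\<gamma> \<notin> Aset m t p"
    and supp: "\<forall>k. k \<notin> {1..m} \<longrightarrow> \<gamma> k = 0"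
  shows "dp_conv {1..m} (restrict_Aset m t p F) (restrict_Aset m t p G) \<gamma> = 0"
  unfolding dp_conv_def
proof (rule sum.neutral, rule ballI)
  obtain k where k: "k \<in> {1..m}" "p ^ t k - 1 < \<gamma> k"
    using \<gamma> supp by (auto simp: Aset_def not_le)
  fix \<alpha> assume "\<alpha> \<in> {..\<gamma>}"
  hence le: "\<alpha> k \<le> \<gamma> k" by (simp add: le_fun_def)
  show "(\<Prod>k\<in>{1..m}. of_nat (\<gamma> k choose \<alpha> k)) * restrict_Aset m t p F \<alpha>
        * restrict_Aset m t p G (\<gamma> - \<alpha>) = 0"
  proof (cases "\<alpha> \<in> Aset m t p \<and> \<gamma> - \<alpha> \<in> Aset m t p")
    case True
    hence "\<alpha> k \<le> p ^ t k - 1" "\<gamma> k - \<alpha> k \<le> p ^ t k - 1"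
      using k(1) by (auto simp: Aset_def)
    moreover have "0 < p ^ t k" using prime_gt_0_nat[OF pr] by simp
    ultimately have "\<alpha> k < p ^ t k" "\<gamma> k - \<alpha> k < p ^ t k" by linarith+
    hence "(of_nat ((\<alpha> k + (\<gamma> k - \<alpha> k)) choose \<alpha> k) :: 'a) = 0"
      by (intro of_nat_choose_carry_eq_0[OF ch pr]) (use k(2) le in auto)
    hence "(\<Prod>k\<in>{1..m}. (of_nat (\<gamma> k choose \<alpha> k) :: 'a)) = 0"
      using k(1) le by (intro prod_zero) auto
    thus ?thesis by simp
  qed (auto simp: restrict_Aset_def)
qed

lemma dp_mult_eq_dp_conv_restrict:
  fixes F G :: "(nat \<Rightarrow> nat) \<Rightarrow> 'a::field"
  assumes ch: "CHAR('a) = p" and pr: "prime p" and supp: "\<forall>k. k \<notin> {1..m} \<longrightarrow> \<gamma> k = 0"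
  shows "dp_mult m t p F G \<gamma> = dp_conv {1..m} (restrict_Aset m t p F) (restrict_Aset m t p G) \<gamma>"
proof (cases "\<gamma> \<in> Aset m t p")
  case True
  thus ?thesis unfolding dp_mult_eq_dp_conv[OF True]
    by (intro dp_conv_cong) (auto simp: restrict_Aset_def dest: Aset_downward_closed)
next
  case False
  thus ?thesis using dp_conv_restrict_Aset_outside[OF ch pr False supp]
    by (simp add: dp_mult_outside_Aset)
qed

lemma dp_conv_shift_at_right:
  fixes F G :: "(nat \<Rightarrow> nat) \<Rightarrow> 'a::comm_semiring_1" and \<gamma> :: "nat \<Rightarrow> nat" and i N :: nat
  assumes K: "finite K" "i \<in> K" and supp: "\<forall>k. k \<notin> K \<longrightarrow> \<gamma> k = 0"
  defines "\<gamma>' \<equiv> \<gamma>(i := \<gamma> i + N)"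
  shows "dp_conv K F (shift_at i N G) \<gamma>
    = (\<Sum>\<alpha>\<in>{..\<gamma>'}. (\<Prod>k\<in>K. of_nat (\<gamma> k choose \<alpha> k)) * F \<alpha> * G (\<gamma>' - \<alpha>))"
proof -
  have fin: "finite {..\<gamma>'}"
    by (rule finite_atMost_fun[OF K(1)]) (use supp K(2) in \<open>auto simp: \<gamma>'_def\<close>)
  have "dp_conv K F (shift_at i N G) \<gamma>
      = (\<Sum>\<alpha>\<in>{..\<gamma>}. (\<Prod>k\<in>K. of_nat (\<gamma> k choose \<alpha> k)) * F \<alpha> * G (\<gamma>' - \<alpha>))"
    unfolding dp_conv_def
  proof (intro sum.cong refl)
    fix \<alpha> assume "\<alpha> \<in> {..\<gamma>}"
    hence "\<gamma>' - \<alpha> = (\<gamma> - \<alpha>)(i := (\<gamma> - \<alpha>) i + N)" by (auto simp: \<gamma>'_def le_fun_def fun_eq_iff)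
    thus "(\<Prod>k\<in>K. of_nat (\<gamma> k choose \<alpha> k)) * F \<alpha> * shift_at i N G (\<gamma> - \<alpha>)
        = (\<Prod>k\<in>K. of_nat (\<gamma> k choose \<alpha> k)) * F \<alpha> * G (\<gamma>' - \<alpha>)"
      by (simp add: shift_at_def)
  qed
  also have "\<dots> = (\<Sum>\<alpha>\<in>{..\<gamma>'}. (\<Prod>k\<in>K. of_nat (\<gamma> k choose \<alpha> k)) * F \<alpha> * G (\<gamma>' - \<alpha>))"
  proof (rule sum.mono_neutral_left[OF fin])
    show "{..\<gamma>} \<subseteq> {..\<gamma>'}" by (auto simp: \<gamma>'_def le_fun_def intro: le_trans)
    show "\<forall>\<alpha>\<in>{..\<gamma>'} - {..\<gamma>}. (\<Prod>k\<in>K. of_nat (\<gamma> k choose \<alpha> k)) * F \<alpha> * G (\<gamma>' - \<alpha>) = 0"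
    proof
      fix \<alpha> assume "\<alpha> \<in> {..\<gamma>'} - {..\<gamma>}"
      hence "\<gamma> i < \<alpha> i" by (auto simp: \<gamma>'_def le_fun_def not_le split: if_splits)
      hence "(\<Prod>k\<in>K. (of_nat (\<gamma> k choose \<alpha> k) :: 'a)) = 0"
        using K by (intro prod_zero) (auto intro!: bexI[of _ i] simp: binomial_eq_0)
      thus "(\<Prod>k\<in>K. of_nat (\<gamma> k choose \<alpha> k)) * F \<alpha> * G (\<gamma>' - \<alpha>) = 0" by simp
    qed
  qed
  finally show ?thesis .
qed

lemma dp_conv_shift_at_left:
  fixes F G :: "(nat \<Rightarrow> nat) \<Rightarrow> 'a::comm_semiring_1" and \<gamma> :: "nat \<Rightarrow> nat" and i N :: nat
  assumes K: "finite K" "i \<in> K" and supp: "\<forall>k. k \<notin> K \<longrightarrow> \<gamma> k = 0"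
  defines "\<gamma>' \<equiv> \<gamma>(i := \<gamma> i + N)"
  shows "dp_conv K (shift_at i N F) G \<gamma>
    = (\<Sum>\<alpha>\<in>{..\<gamma>'}. (if N \<le> \<alpha> i then \<Prod>k\<in>K. of_nat (\<gamma> k choose (\<alpha>(i := \<alpha> i - N)) k) else 0)
          * F \<alpha> * G (\<gamma>' - \<alpha>))"
proof -
  define h where "h \<beta> = \<beta>(i := \<beta> i + N)" for \<beta> :: "nat \<Rightarrow> nat"
  have fin: "finite {..\<gamma>'}"
    by (rule finite_atMost_fun[OF K(1)]) (use supp K(2) in \<open>auto simp: \<gamma>'_def\<close>)
  have "inj h" by (rule injI) (auto simp: h_def fun_eq_iff split: if_splits)
  have image: "h ` {..\<gamma>} = {\<alpha> \<in> {..\<gamma>'}. N \<le> \<alpha> i}"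
  proof (intro equalityI subsetI)
    fix \<alpha> assume "\<alpha> \<in> {\<alpha> \<in> {..\<gamma>'}. N \<le> \<alpha> i}"
    hence "\<alpha> = h (\<alpha>(i := \<alpha> i - N))" and "\<alpha>(i := \<alpha> i - N) \<in> {..\<gamma>}"
      by (auto simp: h_def \<gamma>'_def le_fun_def fun_eq_iff split: if_splits)
    thus "\<alpha> \<in> h ` {..\<gamma>}" by blast
  qed (auto simp: h_def \<gamma>'_def le_fun_def)
  have "dp_conv K (shift_at i N F) G \<gamma>
      = (\<Sum>\<beta>\<in>{..\<gamma>}. (\<Prod>k\<in>K. of_nat (\<gamma> k choose ((h \<beta>)(i := h \<beta> i - N)) k)) * F (h \<beta>) * G (\<gamma>' - h \<beta>))"
    unfolding dp_conv_def
  proof (intro sum.cong refl)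
    fix \<beta> assume "\<beta> \<in> {..\<gamma>}"
    hence "\<gamma>' - h \<beta> = \<gamma> - \<beta>" by (auto simp: \<gamma>'_def h_def le_fun_def fun_eq_iff)
    moreover have "(h \<beta>)(i := h \<beta> i - N) = \<beta>" by (simp add: h_def)
    ultimately show "(\<Prod>k\<in>K. of_nat (\<gamma> k choose \<beta> k)) * shift_at i N F \<beta> * G (\<gamma> - \<beta>)
        = (\<Prod>k\<in>K. of_nat (\<gamma> k choose ((h \<beta>)(i := h \<beta> i - N)) k)) * F (h \<beta>) * G (\<gamma>' - h \<beta>)"
      by (simp add: shift_at_def h_def)
  qed
  also have "\<dots> = (\<Sum>\<alpha>\<in>{\<alpha> \<in> {..\<gamma>'}. N \<le> \<alpha> i}.
      (\<Prod>k\<in>K. of_nat (\<gamma> k choose (\<alpha>(i := \<alpha> i - N)) k)) * F \<alpha> * G (\<gamma>' - \<alpha>))"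
    unfolding image[symmetric] by (subst sum.reindex) (auto intro: inj_on_subset[OF \<open>inj h\<close>])
  also have "\<dots> = (\<Sum>\<alpha>\<in>{..\<gamma>'}. if N \<le> \<alpha> i
      then (\<Prod>k\<in>K. of_nat (\<gamma> k choose (\<alpha>(i := \<alpha> i - N)) k)) * F \<alpha> * G (\<gamma>' - \<alpha>) else 0)"
    by (rule sum.inter_filter[OF fin])
  finally show ?thesis by (rule trans) (rule sum.cong; simp)
qed

text \<open>The Leibniz rule for \<open>\<partial>\<^sub>i\<^sup>p\<^sup>\<^sup>e\<close>: in characteristic \<open>p\<close> the binomial coefficient of the
  shifted multi-index splits as \<open>(c + p\<^sup>e choose a) = (c choose a) + (c choose a - p\<^sup>e)\<close>.\<close>

lemma dp_conv_shift_at: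
  fixes F G :: "(nat \<Rightarrow> nat) \<Rightarrow> 'a::comm_semiring_1"
  assumes ch: "CHAR('a) = p" and pr: "prime p" and K: "finite K" "i \<in> K"
    and supp: "\<forall>k. k \<notin> K \<longrightarrow> \<gamma> k = 0"
  shows "dp_conv K F G (\<gamma>(i := \<gamma> i + p ^ e))
       = dp_conv K (shift_at i (p ^ e) F) G \<gamma> + dp_conv K F (shift_at i (p ^ e) G) \<gamma>"
proof -
  let ?N = "p ^ e"
  let ?\<gamma>' = "\<gamma>(i := \<gamma> i + ?N)"
  have split: "(\<Prod>k\<in>K. f k) = f i * (\<Prod>k\<in>K - {i}. f k)" for f :: "nat \<Rightarrow> 'a"
    using K by (simp add: prod.remove)
  have "(\<Prod>k\<in>K. (of_nat (?\<gamma>' k choose \<alpha> k) :: 'a)) = (\<Prod>k\<in>K. of_nat (\<gamma> k choose \<alpha> k))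
      + (if ?N \<le> \<alpha> i then \<Prod>k\<in>K. of_nat (\<gamma> k choose (\<alpha>(i := \<alpha> i - ?N)) k) else 0)" for \<alpha>
  proof -
    have "(\<Prod>k\<in>K - {i}. (of_nat (?\<gamma>' k choose \<alpha> k) :: 'a)) = (\<Prod>k\<in>K - {i}. of_nat (\<gamma> k choose \<alpha> k))"
      and "(\<Prod>k\<in>K - {i}. (of_nat (\<gamma> k choose (\<alpha>(i := \<alpha> i - ?N)) k) :: 'a))
          = (\<Prod>k\<in>K - {i}. of_nat (\<gamma> k choose \<alpha> k))"
      by (auto intro: prod.cong)
    thus ?thesis
      unfolding split[of "\<lambda>k. of_nat (?\<gamma>' k choose \<alpha> k)"] split[of "\<lambda>k. of_nat (\<gamma> k choose \<alpha> k)"]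
        split[of "\<lambda>k. of_nat (\<gamma> k choose (\<alpha>(i := \<alpha> i - ?N)) k)"]
      by (simp add: of_nat_choose_add_prime_power[OF ch pr] distrib_right)
  qed
  hence "dp_conv K F G ?\<gamma>'
      = (\<Sum>\<alpha>\<in>{..?\<gamma>'}. (\<Prod>k\<in>K. of_nat (\<gamma> k choose \<alpha> k)) * F \<alpha> * G (?\<gamma>' - \<alpha>))
      + (\<Sum>\<alpha>\<in>{..?\<gamma>'}. (if ?N \<le> \<alpha> i then \<Prod>k\<in>K. of_nat (\<gamma> k choose (\<alpha>(i := \<alpha> i - ?N)) k) else 0)
          * F \<alpha> * G (?\<gamma>' - \<alpha>))"
    by (simp add: dp_conv_def distrib_right sum.distrib)
  thus ?thesis
    by (simp add: dp_conv_shift_at_left[OF K supp] dp_conv_shift_at_right[OF K supp] add.commute)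
qed

lemma dp_shift_apply:
  "dp_shift m t p i N F \<beta>
     = (if \<beta> \<in> Aset m t p \<and> \<beta>(i := \<beta> i + N) \<in> Aset m t p then F (\<beta>(i := \<beta> i + N)) else 0)"
  by (simp add: dp_shift_def restrict_Aset_def shift_at_def)

lemma dp_shift_dp_mult:
  fixes F G :: "(nat \<Rightarrow> nat) \<Rightarrow> 'a::field"
  assumes ch: "CHAR('a) = p" and pr: "prime p" and i: "i \<in> {1..m}"
  shows "dp_shift m t p i (p ^ e) (dp_mult m t p F G) \<gamma>
       = dp_mult m t p (dp_shift m t p i (p ^ e) F) G \<gamma> + dp_mult m t p F (dp_shift m t p i (p ^ e) G) \<gamma>"
proof (cases "\<gamma> \<in> Aset m t p")
  case True
  let ?rF = "restrict_Aset m t p F" and ?rG = "restrict_Aset m t p G"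
  have supp: "\<forall>k. k \<notin> {1..m} \<longrightarrow> \<gamma> k = 0" using True by (simp add: Aset_def)
  have "dp_shift m t p i (p ^ e) (dp_mult m t p F G) \<gamma> = dp_mult m t p F G (\<gamma>(i := \<gamma> i + p ^ e))"
    using True by (simp add: dp_shift_apply dp_mult_outside_Aset)
  also have "\<dots> = dp_conv {1..m} (shift_at i (p ^ e) ?rF) ?rG \<gamma> + dp_conv {1..m} ?rF (shift_at i (p ^ e) ?rG) \<gamma>"
    using supp i by (simp add: dp_mult_eq_dp_conv_restrict[OF ch pr] dp_conv_shift_at[OF ch pr])
  also have "\<dots> = dp_mult m t p (dp_shift m t p i (p ^ e) F) G \<gamma> + dp_mult m t p F (dp_shift m t p i (p ^ e) G) \<gamma>"
    unfolding dp_mult_eq_dp_conv[OF True] using Aset_downward_closed[OF True]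
    by (intro arg_cong2[where f = "(+)"] dp_conv_cong) (auto simp: dp_shift_def restrict_Aset_def)
  finally show ?thesis .
qed (simp add: dp_shift_apply dp_mult_outside_Aset)

lemma dp_shift_zero [simp]: "dp_shift m t p i N (\<lambda>_. 0) = (\<lambda>_. 0)"
  by (simp add: dp_shift_apply fun_eq_iff)

lemma dp_shift_add:
  "dp_shift m t p i a (dp_shift m t p i b F) = dp_shift m t p i (a + b) F"
proof
  fix \<beta>
  have "\<beta>(i := \<beta> i + a) \<le> \<beta>(i := \<beta> i + (a + b))" by (simp add: le_fun_def)
  thus "dp_shift m t p i a (dp_shift m t p i b F) \<beta> = dp_shift m t p i (a + b) F \<beta>"
    by (auto simp: dp_shift_apply add.assoc dest: Aset_downward_closed)
qed

lemma dp_shift_commute: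
  "dp_shift m t p i a (dp_shift m t p k b F) = dp_shift m t p k b (dp_shift m t p i a F)"
proof
  fix \<beta>
  let ?x = "\<beta>(i := \<beta> i + a)" and ?y = "\<beta>(k := \<beta> k + b)"
  have e: "?x(k := ?x k + b) = ?y(i := ?y i + a)" by (auto simp: fun_eq_iff)
  have "?x \<le> ?x(k := ?x k + b)" "?y \<le> ?x(k := ?x k + b)" by (auto simp: le_fun_def e)
  thus "dp_shift m t p i a (dp_shift m t p k b F) \<beta> = dp_shift m t p k b (dp_shift m t p i a F) \<beta>"
    unfolding dp_shift_apply e by (auto dest: Aset_downward_closed)
qed

lemma dp_mult_zero_left [simp]: "dp_mult m t p (\<lambda>_. 0) G \<gamma> = 0"
  by (auto simp: dp_mult_def intro!: sum.neutral)

lemma dp_mult_zero_right [simp]: "dp_mult m t p F (\<lambda>_. 0) \<gamma> = 0"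
  by (auto simp: dp_mult_def intro!: sum.neutral)

lemma dp_mult_cmult_right: "dp_mult m t p F (\<lambda>\<beta>. c * G \<beta>) \<gamma> = c * dp_mult m t p F G \<gamma>"
  unfolding dp_mult_def by (auto simp: sum_distrib_left mult_ac intro!: sum.cong)

lemma dp_mult_add_left:
  "dp_mult m t p (\<lambda>\<alpha>. F \<alpha> + H \<alpha>) G \<gamma> = dp_mult m t p F G \<gamma> + dp_mult m t p H G \<gamma>"
  unfolding dp_mult_def by (auto simp: sum.distrib[symmetric] algebra_simps intro!: sum.cong)

lemma dp_mult_sum_left:
  "finite J \<Longrightarrow> dp_mult m t p (\<lambda>\<alpha>. \<Sum>j\<in>J. F j \<alpha>) G \<gamma> = (\<Sum>j\<in>J. dp_mult m t p (F j) G \<gamma>)"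
  by (induction J rule: finite_induct) (simp_all add: dp_mult_add_left)

lemma dp_mult_cong:
  "(\<And>\<alpha>. \<alpha> \<in> Aset m t p \<Longrightarrow> F \<alpha> = F' \<alpha>) \<Longrightarrow> (\<And>\<beta>. \<beta> \<in> Aset m t p \<Longrightarrow> G \<beta> = G' \<beta>)
   \<Longrightarrow> dp_mult m t p F G \<gamma> = dp_mult m t p F' G' \<gamma>"
  by (simp add: dp_mult_def cong: sum.cong if_cong)

lemma dp_mult_one_left:
  "dp_mult m t p (\<lambda>\<alpha>. if \<alpha> = (\<lambda>_. 0) then 1 else 0) G \<gamma> = restrict_Aset m t p G \<gamma>"
proof (cases "\<gamma> \<in> Aset m t p")
  case True
  have "finite {..\<gamma>}" using finite_subset[OF _ finite_Aset] Aset_downward_closed[OF True] by blast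
  moreover have "(\<lambda>_. 0) \<in> {..\<gamma>}" by (simp add: le_fun_def)
  moreover have "\<gamma> - (\<lambda>_. 0) = \<gamma>" by (simp add: fun_diff_def)
  hence "dp_conv {1..m} (\<lambda>\<alpha>. if \<alpha> = (\<lambda>_. 0) then 1 else 0) G \<gamma>
      = (\<Sum>\<alpha>\<in>{..\<gamma>}. if \<alpha> = (\<lambda>_. 0) then G \<gamma> else 0)"
    unfolding dp_conv_def by (intro sum.cong) auto
  ultimately show ?thesis using True by (simp add: dp_mult_eq_dp_conv restrict_Aset_def sum.delta')
qed (simp add: dp_mult_def restrict_Aset_def)

section \<open>Layers of \<open>\<O>\<close>\<close>

definition layer :: "nat set \<Rightarrow> 'a sO \<Rightarrow> (nat \<Rightarrow> nat) \<Rightarrow> 'a" where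
  "layer u f = (\<lambda>\<alpha>. f (\<alpha>, u))"

text \<open>\<open>omega_layer m n P\<close> is \<open>x\<^sup>\<omega> \<Sum>\<^sub>\<gamma> P \<gamma> x\<^sup>(\<^sup>\<gamma>\<^sup>)\<close>.\<close>

definition omega_layer :: "nat \<Rightarrow> nat \<Rightarrow> ((nat \<Rightarrow> nat) \<Rightarrow> 'a::zero) \<Rightarrow> 'a sO" where
  "omega_layer m n P = (\<lambda>(\<gamma>, w). if w = omega m n then P \<gamma> else 0)"

lemma sum_eq_single:
  assumes "finite S" "a \<in> S" "\<And>x. x \<in> S \<Longrightarrow> x \<noteq> a \<Longrightarrow> f x = 0"
  shows "sum f S = f a"
  using sum.remove[OF assms(1,2), of f] sum.neutral[of "S - {a}" f] assms(3) by simp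

lemma Bas_iff: "(\<gamma>, w) \<in> Bas m n t p \<longleftrightarrow> \<gamma> \<in> Aset m t p \<and> w \<subseteq> {m+1..m+n}"
  by (simp add: Bas_def)

lemma layer_omega_layer: "layer u (omega_layer m n P) = (if u = omega m n then P else (\<lambda>_. 0))"
  by (auto simp: layer_def omega_layer_def)

lemma sign_uv_empty_left [simp]: "sign_uv {} v = 1"
  and sign_uv_empty_right [simp]: "sign_uv u {} = 1"
  by (simp_all add: sign_uv_def)

lemma omul_eq_layer_sum:
  "omul m n t p f g (\<gamma>, w) = (if (\<gamma>, w) \<in> Bas m n t p then
     (\<Sum>u\<in>Pow {m+1..m+n}. \<Sum>v\<in>Pow {m+1..m+n}.
        if u \<inter> v = {} \<and> u \<union> v = w then sign_uv u v * dp_mult m t p (layer u f) (layer v g) \<gamma> else 0)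
     else 0)"
proof (cases "(\<gamma>, w) \<in> Bas m n t p")
  case True
  let ?A = "Aset m t p" and ?P = "Pow {m+1..m+n}"
  define T where "T \<alpha> u \<beta> v = (if (\<lambda>k. \<alpha> k + \<beta> k) = \<gamma> \<and> u \<inter> v = {} \<and> u \<union> v = w
         then (\<Prod>k\<in>{1..m}. of_nat ((\<alpha> k + \<beta> k) choose \<alpha> k)) * sign_uv u v * f (\<alpha>, u) * g (\<beta>, v)
         else (0::'a))" for \<alpha> u \<beta> v
  have "omul m n t p f g (\<gamma>, w) = (\<Sum>\<alpha>\<in>?A. \<Sum>u\<in>?P. \<Sum>\<beta>\<in>?A. \<Sum>v\<in>?P. T \<alpha> u \<beta> v)"
    using True by (simp add: omul_def Bas_def T_def sum.cartesian_product[symmetric])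
  also have "\<dots> = (\<Sum>u\<in>?P. \<Sum>\<alpha>\<in>?A. \<Sum>v\<in>?P. \<Sum>\<beta>\<in>?A. T \<alpha> u \<beta> v)"
    by (subst sum.swap) (intro sum.cong refl sum.swap)
  also have "\<dots> = (\<Sum>u\<in>?P. \<Sum>v\<in>?P. \<Sum>\<alpha>\<in>?A. \<Sum>\<beta>\<in>?A. T \<alpha> u \<beta> v)"
    by (intro sum.cong refl sum.swap)
  also have "\<dots> = (\<Sum>u\<in>?P. \<Sum>v\<in>?P.
        if u \<inter> v = {} \<and> u \<union> v = w then sign_uv u v * dp_mult m t p (layer u f) (layer v g) \<gamma> else 0)"
    using True by (intro sum.cong refl)
      (auto simp: T_def dp_mult_def layer_def Bas_iff sum_distrib_left mult_ac if_distrib cong: if_cong)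
  finally show ?thesis using True by simp
qed (simp add: omul_def)

lemma omul_zero_left [simp]: "omul m n t p (\<lambda>_. 0) g z = 0"
  and omul_zero_right [simp]: "omul m n t p f (\<lambda>_. 0) z = 0"
  by (cases z; simp add: omul_def cong: if_cong)+

lemma omul_empty_layer: "omul m n t p f g (\<gamma>, {}) = dp_mult m t p (layer {} f) (layer {} g) \<gamma>"
proof (cases "\<gamma> \<in> Aset m t p")
  case True
  let ?P = "Pow {m+1..m+n}"
  have "omul m n t p f g (\<gamma>, {}) = (\<Sum>u\<in>?P. \<Sum>v\<in>?P.
        if u \<inter> v = {} \<and> u \<union> v = {} then sign_uv u v * dp_mult m t p (layer u f) (layer v g) \<gamma> else 0)"
    using True by (simp add: omul_eq_layer_sum Bas_iff)
  also have "\<dots> = dp_mult m t p (layer {} f) (layer {} g) \<gamma>"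
    by (simp add: sum_eq_single[where a="{}"] cong: if_cong)
  finally show ?thesis .
qed (simp add: omul_def Bas_iff dp_mult_outside_Aset)

lemma omul_omega_layer_left:
  "omul m n t p (omega_layer m n P) g = omega_layer m n (dp_mult m t p P (layer {} g))"
proof
  fix z :: idx
  obtain \<gamma> w where z: "z = (\<gamma>, w)" by (cases z)
  let ?P = "Pow {m+1..m+n}" and ?\<omega> = "omega m n"
  show "omul m n t p (omega_layer m n P) g z = omega_layer m n (dp_mult m t p P (layer {} g)) z"
  proof (cases "(\<gamma>, w) \<in> Bas m n t p")
    case True
    have "omul m n t p (omega_layer m n P) g (\<gamma>, w) = (\<Sum>u\<in>?P. \<Sum>v\<in>?P.
        if u \<inter> v = {} \<and> u \<union> v = w
        then sign_uv u v * dp_mult m t p (layer u (omega_layer m n P)) (layer v g) \<gamma> else 0)"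
      using True by (simp add: omul_eq_layer_sum)
    also have "\<dots> = (\<Sum>v\<in>?P. if ?\<omega> \<inter> v = {} \<and> ?\<omega> \<union> v = w
        then sign_uv ?\<omega> v * dp_mult m t p P (layer v g) \<gamma> else 0)"
      by (rule sum_eq_single[where a="?\<omega>", THEN trans])
        (auto simp: omega_def layer_omega_layer cong: if_cong)
    also have "\<dots> = (if w = ?\<omega> then dp_mult m t p P (layer {} g) \<gamma> else 0)"
      by (rule sum_eq_single[where a="{}", THEN trans]) (auto simp: omega_def cong: if_cong)
    finally show ?thesis by (simp add: z omega_layer_def)
  qed (auto simp: z omul_def omega_layer_def Bas_iff omega_def dp_mult_outside_Aset)
qed

lemma omul_omega_layer_right:
  "omul m n t p f (omega_layer m n R) = omega_layer m n (dp_mult m t p (layer {} f) R)"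
proof
  fix z :: idx
  obtain \<gamma> w where z: "z = (\<gamma>, w)" by (cases z)
  let ?P = "Pow {m+1..m+n}" and ?\<omega> = "omega m n"
  show "omul m n t p f (omega_layer m n R) z = omega_layer m n (dp_mult m t p (layer {} f) R) z"
  proof (cases "(\<gamma>, w) \<in> Bas m n t p")
    case True
    have "omul m n t p f (omega_layer m n R) (\<gamma>, w) = (\<Sum>u\<in>?P. \<Sum>v\<in>?P.
        if u \<inter> v = {} \<and> u \<union> v = w
        then sign_uv u v * dp_mult m t p (layer u f) (layer v (omega_layer m n R)) \<gamma> else 0)"
      using True by (simp add: omul_eq_layer_sum)
    also have "\<dots> = (\<Sum>u\<in>?P. if u \<inter> ?\<omega> = {} \<and> u \<union> ?\<omega> = w
        then sign_uv u ?\<omega> * dp_mult m t p (layer u f) R \<gamma> else 0)"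
      by (intro sum.cong refl sum_eq_single[where a="?\<omega>", THEN trans])
        (auto simp: omega_def layer_omega_layer cong: if_cong)
    also have "\<dots> = (if w = ?\<omega> then dp_mult m t p (layer {} f) R \<gamma> else 0)"
      by (rule sum_eq_single[where a="{}", THEN trans]) (auto simp: omega_def cong: if_cong)
    finally show ?thesis by (simp add: z omega_layer_def)
  qed (auto simp: z omul_def omega_layer_def Bas_iff omega_def dp_mult_outside_Aset)
qed

lemma omul_one_left:
  "omul m n t p (bas (\<lambda>_. 0, {})) g z = (if z \<in> Bas m n t p then g z else 0)"
proof -
  obtain \<gamma> w where z: "z = (\<gamma>, w)" by (cases z)
  let ?P = "Pow {m+1..m+n}"
  have lay: "layer u (bas (\<lambda>_. 0, {})) = (if u = {} then (\<lambda>\<alpha>. if \<alpha> = (\<lambda>_. 0) then 1 else 0) else (\<lambda>_. 0))" for u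
    by (auto simp: bas_def layer_def fun_eq_iff)
  show ?thesis
  proof (cases "(\<gamma>, w) \<in> Bas m n t p")
    case True
    have "omul m n t p (bas (\<lambda>_. 0, {})) g (\<gamma>, w) = (\<Sum>u\<in>?P. \<Sum>v\<in>?P. if u \<inter> v = {} \<and> u \<union> v = w
        then sign_uv u v * dp_mult m t p (layer u (bas (\<lambda>_. 0, {}))) (layer v g) \<gamma> else 0)"
      using True by (simp add: omul_eq_layer_sum)
    also have "\<dots> = (\<Sum>v\<in>?P. if v = w then dp_mult m t p (layer {} (bas (\<lambda>_. 0, {}))) (layer v g) \<gamma> else 0)"
      by (rule sum_eq_single[where a="{}", THEN trans]) (auto simp: lay cong: if_cong)
    also have "\<dots> = g (\<gamma>, w)"
      using True by (simp add: Bas_iff bas_def dp_mult_one_left restrict_Aset_def layer_def)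
    finally show ?thesis using True z by simp
  qed (simp add: z omul_def)
qed

lemma oderiv_zero [simp]: "oderiv m n t p k (\<lambda>_. 0) = (\<lambda>_. 0)"
  by (auto simp: oderiv_def)

lemma oderiv_add: "oderiv m n t p k (\<lambda>z. f z + g z) z = oderiv m n t p k f z + oderiv m n t p k g z"
  by (cases z) (auto simp: oderiv_def algebra_simps)

lemma oderiv_one: "oderiv m n t p k (bas (\<lambda>_. 0, {})) = (\<lambda>_. 0)"
proof
  fix z :: idx
  obtain \<beta> v where z: "z = (\<beta>, v)" by (cases z)
  have "\<beta>(k := \<beta> k + 1) \<noteq> (\<lambda>_. 0)" by (metis fun_upd_same add_is_0 zero_neq_one)
  thus "oderiv m n t p k (bas (\<lambda>_. 0, {})) z = 0" unfolding z by (auto simp: oderiv_def bas_def)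
qed

lemma layer_empty_oderiv:
  "k \<in> {1..m} \<Longrightarrow> layer {} (oderiv m n t p k h) = dp_shift m t p k 1 (layer {} h)"
  by (auto simp: layer_def dp_shift_apply oderiv_def Bas_iff)

lemma oderiv_omega_layer:
  "k \<in> {1..m} \<Longrightarrow> oderiv m n t p k (omega_layer m n Q) = omega_layer m n (dp_shift m t p k 1 Q)"
  by (auto simp: omega_layer_def dp_shift_apply oderiv_def Bas_iff omega_def)

lemma sign_uv_singleton: "(sign_uv {k} v :: 'a::field) * (-1) ^ card {l \<in> v. l < k} = 1"
proof -
  have "{(a, b). a \<in> {k} \<and> b \<in> v \<and> b < a} = (\<lambda>b. (k, b)) ` {l \<in> v. l < k}" by auto
  moreover have "inj_on (\<lambda>b. (k, b)) {l \<in> v. l < k}" by (auto simp: inj_on_def)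
  ultimately have "card {(a, b). a \<in> {k} \<and> b \<in> v \<and> b < a} = card {l \<in> v. l < k}"
    by (simp add: card_image)
  thus ?thesis unfolding sign_uv_def by (simp add: minus_one_power_iff)
qed

lemma layer_oderiv_omega_layer_odd:
  assumes k: "k \<in> {m+1..m+n}" and v: "v \<subseteq> {m+1..m+n}"
  shows "layer v (oderiv m n t p k (omega_layer m n Q)) = (if v = omega m n - {k}
    then (\<lambda>\<beta>. if \<beta> \<in> Aset m t p then (-1) ^ card {l \<in> v. l < k} * Q \<beta> else 0) else (\<lambda>_. 0))"
proof (cases "v = omega m n - {k}")
  case True
  hence "k \<notin> v" "insert k v = omega m n" using k by (auto simp: omega_def)
  thus ?thesis using True k v by (auto simp: layer_def oderiv_def omega_layer_def Bas_iff)
next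
  case False
  hence "\<not> (k \<notin> v \<and> insert k v = omega m n)" by auto
  thus ?thesis using False k v by (auto simp: layer_def oderiv_def omega_layer_def Bas_iff fun_eq_iff)
qed

text \<open>For odd \<open>k\<close>, \<open>\<partial>\<^sub>k\<close> removes \<open>x\<^sub>k\<close> from \<open>x\<^sup>\<omega>\<close>, and an odd coefficient can only put it back.\<close>

lemma omul_oderiv_omega_layer_odd:
  assumes k: "k \<in> {m+1..m+n}" and odd: "\<forall>\<alpha> u. f (\<alpha>, u) \<noteq> 0 \<longrightarrow> odd (card u)"
  shows "omul m n t p f (oderiv m n t p k (omega_layer m n Q)) = omega_layer m n (dp_mult m t p (layer {k} f) Q)"
proof
  fix z :: idx
  obtain \<gamma> w where z: "z = (\<gamma>, w)" by (cases z)
  let ?P = "Pow {m+1..m+n}" and ?\<omega> = "omega m n" and ?A = "Aset m t p"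
  let ?g = "oderiv m n t p k (omega_layer m n Q)"
  define v0 where "v0 = omega m n - {k}"
  define s where "s = ((-1) ^ card {l \<in> v0. l < k} :: 'a)"
  have v0P: "v0 \<in> ?P" by (auto simp: v0_def omega_def)
  have k_v0: "{k} \<inter> v0 = {}" "{k} \<union> v0 = ?\<omega>" using k by (auto simp: v0_def omega_def)
  have lay: "layer v ?g = (if v = v0 then (\<lambda>\<beta>. if \<beta> \<in> ?A then s * Q \<beta> else 0) else (\<lambda>_. 0))"
    if "v \<in> ?P" for v
    using that by (auto simp: layer_oderiv_omega_layer_odd[OF k] v0_def s_def)
  have no_even_layer: "layer {} f = (\<lambda>_. 0)" using odd by (fastforce simp: layer_def)
  show "omul m n t p f ?g z = omega_layer m n (dp_mult m t p (layer {k} f) Q) z"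
  proof (cases "(\<gamma>, w) \<in> Bas m n t p")
    case True
    have "omul m n t p f ?g (\<gamma>, w) = (\<Sum>u\<in>?P. \<Sum>v\<in>?P. if u \<inter> v = {} \<and> u \<union> v = w
        then sign_uv u v * dp_mult m t p (layer u f) (layer v ?g) \<gamma> else 0)"
      using True by (simp add: omul_eq_layer_sum)
    also have "\<dots> = (\<Sum>u\<in>?P. if u \<inter> v0 = {} \<and> u \<union> v0 = w
        then sign_uv u v0 * dp_mult m t p (layer u f) (layer v0 ?g) \<gamma> else 0)"
      by (intro sum.cong refl sum_eq_single[where a=v0, THEN trans]) (use v0P in \<open>auto simp: lay cong: if_cong\<close>)
    also have "\<dots> = (if w = ?\<omega> then sign_uv {k} v0 * dp_mult m t p (layer {k} f) (layer v0 ?g) \<gamma> else 0)"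
    proof (rule sum_eq_single[where a="{k}", THEN trans])
      fix u assume u: "u \<in> ?P" "u \<noteq> {k}"
      show "(if u \<inter> v0 = {} \<and> u \<union> v0 = w then sign_uv u v0 * dp_mult m t p (layer u f) (layer v0 ?g) \<gamma> else 0) = 0"
      proof (cases "u = {}")
        case False
        then obtain y where "y \<in> u" "y \<noteq> k" using u(2) by blast
        hence "u \<inter> v0 \<noteq> {}" using u(1) by (auto simp: v0_def omega_def)
        thus ?thesis by simp
      qed (simp add: no_even_layer)
    qed (use k k_v0 in auto)
    also have "\<dots> = omega_layer m n (dp_mult m t p (layer {k} f) Q) (\<gamma>, w)"
    proof -
      have "dp_mult m t p (layer {k} f) (layer v0 ?g) \<gamma> = s * dp_mult m t p (layer {k} f) Q \<gamma>"
        by (simp add: lay[OF v0P] dp_mult_cong[where G' = "\<lambda>\<beta>. s * Q \<beta>"] dp_mult_cmult_right)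
      thus ?thesis using sign_uv_singleton[of k v0]
        by (auto simp: omega_layer_def s_def mult.assoc[symmetric])
    qed
    finally show ?thesis by (simp add: z)
  qed (auto simp: z omul_def omega_layer_def Bas_iff omega_def dp_mult_outside_Aset)
qed

section \<open>The map \<open>\<Theta>\<close>\<close>

lemma opart_add_opart: "(\<lambda>z. opart f c z + opart f (\<not> c) z) = f"
  by (auto simp: opart_def fun_eq_iff)

text \<open>\<open>omega_field m n P\<close> is \<open>x\<^sup>\<omega> \<Sum>\<^sub>j P\<^sub>j \<partial>\<^sub>j\<close>, with coefficients \<open>P\<^sub>j\<close> in the divided powers.\<close>

definition omega_field :: "nat \<Rightarrow> nat \<Rightarrow> (nat \<Rightarrow> (nat \<Rightarrow> nat) \<Rightarrow> 'a::zero) \<Rightarrow> 'a sW" where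
  "omega_field m n P = (\<lambda>j. omega_layer m n (P j))"

lemma Wbr_dW_left:
  assumes i: "i \<in> {1..m}"
  shows "Wbr m n t p (dW i) E = (\<lambda>j. oderiv m n t p i (E j))"
proof (intro ext)
  fix j :: nat and z :: idx
  have odd_part: "Wpart m (dW i :: 'a sW) True = (\<lambda>_ _. 0)"
    and even_part: "Wpart m (dW i :: 'a sW) False = dW i"
    using i by (auto simp: Wpart_def dW_def opart_def bas_def fun_eq_iff)
  have "Wapp m n t p (dW i) h z = oderiv m n t p i h z" for h :: "'a sO"
  proof -
    have "Wapp m n t p (dW i) h z = omul m n t p (bas (\<lambda>_. 0, {})) (oderiv m n t p i h) z"
      unfolding Wapp_def by (rule sum_eq_single[where a=i, THEN trans]) (use i in \<open>auto simp: dW_def\<close>)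
    thus ?thesis by (cases z) (simp add: omul_one_left oderiv_def)
  qed
  moreover have "Wapp m n t p E' (dW i j) z = 0" for E' :: "'a sW"
    by (simp add: Wapp_def dW_def oderiv_one)
  ultimately have "Wbr m n t p (dW i) E j z = (\<Sum>b\<in>UNIV. oderiv m n t p i (Wpart m E b j) z)"
    by (simp add: Wbr_def UNIV_bool odd_part even_part brh_def Wapp_def)
  also have "\<dots> = oderiv m n t p i (E j) z"
    by (simp add: UNIV_bool Wpart_def oderiv_add[symmetric] opart_add_opart)
  finally show "Wbr m n t p (dW i) E j z = oderiv m n t p i (E j) z" .
qed

lemma funpow_dp_shift: "0 < N \<Longrightarrow> (dp_shift m t p i 1 ^^ N) F = dp_shift m t p i N F"
proof (induction N)
  case (Suc N)
  thus ?case by (cases "N = 0") (simp_all add: dp_shift_add)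
qed simp

lemma restrict_Aset_dp_shift [simp]: "restrict_Aset m t p (dp_shift m t p i N F) = dp_shift m t p i N F"
  by (simp add: dp_shift_def restrict_Aset_def fun_eq_iff)

lemma Theta_eq_omega_field:
  assumes i: "i \<in> {1..m}" and p: "0 < p"
  shows "Theta m n t p i q D = omega_field m n (\<lambda>j. dp_shift m t p i (p ^ q) (layer {} (D j)))"
proof
  fix j
  have Wbr_pow: "((\<lambda>E. Wbr m n t p (dW i) E) ^^ N) D j = (oderiv m n t p i ^^ N) (D j)" for N
    by (induction N) (simp_all add: Wbr_dW_left[OF i])
  have "layer {} ((oderiv m n t p i ^^ N) f) = (dp_shift m t p i 1 ^^ N) (layer {} f)" for N f
    by (induction N) (simp_all add: layer_empty_oderiv[OF i])
  hence layer_pow: "layer {} ((oderiv m n t p i ^^ p ^ q) f) = dp_shift m t p i (p ^ q) (layer {} f)" for f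
    using p by (metis funpow_dp_shift zero_less_power)
  have "bas (\<lambda>_. 0, omega m n) = omega_layer m n (\<lambda>\<alpha>. if \<alpha> = (\<lambda>_. 0) then 1 else (0::'a))"
    by (auto simp: bas_def omega_layer_def fun_eq_iff)
  thus "Theta m n t p i q D j = omega_field m n (\<lambda>j. dp_shift m t p i (p ^ q) (layer {} (D j))) j"
    by (simp add: omega_field_def Theta_def Wbr_pow omul_omega_layer_left layer_pow dp_mult_one_left[abs_def])
qed

section \<open>Elements of \<open>H\<^sub>0\<close>\<close>

text \<open>The last condition says that \<open>\<Sum>\<^sub>k\<^sub>\<in>\<^sub>I\<^sub>\<^sub>1 \<partial>\<^sub>k x\<^sub>k\<close> has no component free of odd variables.\<close>

definition H0_like :: "nat \<Rightarrow> nat \<Rightarrow> 'a::field sW \<Rightarrow> bool" where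
  "H0_like m n x \<longleftrightarrow> (\<forall>j. j \<notin> {1..m+n} \<longrightarrow> x j = (\<lambda>_. 0))
     \<and> (\<forall>j \<alpha> u. x j (\<alpha>, u) \<noteq> 0 \<longrightarrow> (odd (card u) \<longleftrightarrow> m < j))
     \<and> (\<forall>\<alpha>. (\<Sum>k\<in>{m+1..m+n}. x k (\<alpha>, {k})) = 0)"

lemma prm_I0: "even m \<Longrightarrow> j \<in> {1..m} \<Longrightarrow> prm m n j \<in> {1..m}"
  by (auto simp: prm_def Let_def elim!: evenE)

lemma prm_I1: "j \<in> {m+1..m+n} \<Longrightarrow> prm m n j \<in> {m+1..m+n}"
  by (auto simp: prm_def Let_def)

lemma DH_even:
  assumes even: "\<forall>\<alpha> u. f (\<alpha>, u) \<noteq> 0 \<longrightarrow> even (card u)"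
  shows "DH m n t p f j z
    = (if j \<in> {1..m+n} then tau m (prm m n j) * oderiv m n t p (prm m n j) f z else 0)"
proof -
  have "opart f True = (\<lambda>_. 0)" "opart f False = f"
    using even by (auto simp: opart_def fun_eq_iff)
  thus ?thesis by (simp add: DH_def Let_def UNIV_bool)
qed

lemma oderiv_parity:
  assumes even: "\<forall>\<alpha> u. f (\<alpha>, u) \<noteq> 0 \<longrightarrow> even (card u)"
    and nz: "oderiv m n t p i f (\<beta>, v) \<noteq> 0"
  shows "odd (card v) \<longleftrightarrow> m < i"
proof -
  have "(\<beta>, v) \<in> Bas m n t p" using nz by (auto simp: oderiv_def split: if_splits)
  hence fin: "finite v" by (auto simp: Bas_iff intro: finite_subset)
  show ?thesis
  proof (cases "i \<in> {1..m}")
    case True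
    then obtain \<beta>' where "f (\<beta>', v) \<noteq> 0" using nz by (auto simp: oderiv_def split: if_splits)
    thus ?thesis using even True by auto
  next
    case False
    hence "i \<in> {m+1..m+n}" "i \<notin> v" "f (\<beta>, insert i v) \<noteq> 0"
      using nz by (auto simp: oderiv_def split: if_splits)
    thus ?thesis using even fin by fastforce
  qed
qed

lemma DH_parity:
  assumes m: "even m" and even: "\<forall>\<alpha> u. f (\<alpha>, u) \<noteq> 0 \<longrightarrow> even (card u)"
    and nz: "DH m n t p f j (\<beta>, v) \<noteq> 0"
  shows "odd (card v) \<longleftrightarrow> m < j"
proof -
  have j: "j \<in> {1..m+n}" and "oderiv m n t p (prm m n j) f (\<beta>, v) \<noteq> 0"
    using nz by (auto simp: DH_even[OF even] split: if_splits)
  hence "odd (card v) \<longleftrightarrow> m < prm m n j" by (intro oderiv_parity[OF even])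
  moreover have "m < prm m n j \<longleftrightarrow> m < j"
    using prm_I0[OF m, of j n] prm_I1[of j m n] j by (cases "j \<le> m") auto
  ultimately show ?thesis by simp
qed

lemma DH_odd_singleton:
  assumes even: "\<forall>\<alpha> u. f (\<alpha>, u) \<noteq> 0 \<longrightarrow> even (card u)" and k: "k \<in> {m+1..m+n}"
  shows "DH m n t p f k (\<alpha>, {k}) = (if \<alpha> \<in> Aset m t p \<and> prm m n k \<noteq> k
      then (if k < prm m n k then -1 else 1) * f (\<alpha>, {prm m n k, k}) else 0)"
proof -
  have k': "prm m n k \<in> {m+1..m+n}" by (rule prm_I1[OF k])
  hence "tau m (prm m n k) = (1::'a)" by (simp add: tau_def)
  moreover have "{l. l = k \<and> l < prm m n k} = (if k < prm m n k then {k} else {})" by auto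
  ultimately show ?thesis using k k' by (auto simp: DH_even[OF even] oderiv_def Bas_iff)
qed

text \<open>Here \<open>n\<close> odd is used: the odd indices pair off as \<open>k, k + s\<close> with opposite signs,
  and the last one, \<open>m + n\<close>, is its own partner and contributes nothing.\<close>

lemma sum_DH_odd_singleton:
  assumes even: "\<forall>\<alpha> u. f (\<alpha>, u) \<noteq> 0 \<longrightarrow> even (card u)" and n: "odd n"
  shows "(\<Sum>k\<in>{m+1..m+n}. DH m n t p f k (\<alpha>, {k})) = 0"
proof -
  define s where "s = n div 2"
  have n: "n = 2 * s + 1" using n unfolding s_def by presburger
  let ?\<phi> = "\<lambda>k. DH m n t p f k (\<alpha>, {k})"
  have "{m+1..m+n} = {m+1..m+s} \<union> ({m+1+s..m+s+s} \<union> {m+n})" using n by auto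
  hence "(\<Sum>k\<in>{m+1..m+n}. ?\<phi> k) = (\<Sum>k\<in>{m+1..m+s}. ?\<phi> k) + (\<Sum>k\<in>{m+1+s..m+s+s}. ?\<phi> k) + ?\<phi> (m+n)"
    using n by (simp add: sum.union_disjoint ivl_disj_int add.assoc)
  also have "(\<Sum>k\<in>{m+1+s..m+s+s}. ?\<phi> k) = (\<Sum>k\<in>{m+1..m+s}. ?\<phi> (k + s))"
    by (rule sum.shift_bounds_cl_nat_ivl)
  also have "?\<phi> (m+n) = 0"
    using n DH_odd_singleton[OF even, of "m+n" m n t p \<alpha>] by (simp add: prm_def Let_def)
  also have "(\<Sum>k\<in>{m+1..m+s}. ?\<phi> k) + (\<Sum>k\<in>{m+1..m+s}. ?\<phi> (k + s)) + 0 = 0"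
  proof (simp only: sum.distrib[symmetric] add_0_right, rule sum.neutral, rule ballI)
    fix k assume k: "k \<in> {m+1..m+s}"
    have "prm m n k = k + s" "prm m n (k + s) = k" using k n by (auto simp: prm_def Let_def)
    moreover have "{k + s, k} = {k, k + s}" by auto
    ultimately show "?\<phi> k + ?\<phi> (k + s) = 0"
      using k n by (simp add: DH_odd_singleton[OF even])
  qed
  finally show ?thesis .
qed

lemma H0_like_H0:
  assumes m: "even m" and n: "odd n" and x: "x \<in> (H0 m n t p :: 'a::field sW set)"
  shows "H0_like m n x"
proof -
  obtain c :: "idx \<Rightarrow> 'a" where x: "x = (\<lambda>j z. \<Sum>y\<in>HB m n t p. c y * DH m n t p (bas y) j z)"
    using x by (auto simp: H0_def)
  have even: "\<forall>\<alpha> u. bas y (\<alpha>, u) \<noteq> (0::'a) \<longrightarrow> even (card u)" if "y \<in> HB m n t p" for y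
    using that by (auto simp: bas_def HB_def)
  have "odd (card u) \<longleftrightarrow> m < j" if "x j (\<alpha>, u) \<noteq> 0" for j \<alpha> u
  proof -
    obtain y where "y \<in> HB m n t p" "DH m n t p (bas y) j (\<alpha>, u) \<noteq> (0::'a)"
      using \<open>x j (\<alpha>, u) \<noteq> 0\<close> unfolding x by (metis (no_types, lifting) mult_zero_right sum.neutral)
    thus ?thesis using DH_parity[OF m even] by blast
  qed
  moreover have "(\<Sum>k\<in>{m+1..m+n}. x k (\<alpha>, {k})) = 0" for \<alpha>
  proof -
    have "(\<Sum>k\<in>{m+1..m+n}. x k (\<alpha>, {k}))
        = (\<Sum>y\<in>HB m n t p. c y * (\<Sum>k\<in>{m+1..m+n}. DH m n t p (bas y) k (\<alpha>, {k})))"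
      unfolding x by (simp add: sum_distrib_left) (rule sum.swap)
    also have "\<dots> = 0"
      using sum_DH_odd_singleton[OF even n] by (intro sum.neutral ballI) (simp only: mult_zero_right)
    finally show ?thesis .
  qed
  moreover have "x j = (\<lambda>_. 0)" if "j \<notin> {1..m+n}" for j
    using that by (auto simp: x DH_def)
  ultimately show ?thesis unfolding H0_like_def by blast
qed

lemma H0_like_layer_empty:
  assumes x: "H0_like m n x" and j: "j \<notin> {1..m}"
  shows "layer {} (x j) = (\<lambda>_. 0)"
proof (cases "j \<in> {1..m+n}")
  case True
  hence "m < j" using j by auto
  have "x j (\<alpha>, {}) = 0" for \<alpha>
  proof (rule ccontr)
    assume "x j (\<alpha>, {}) \<noteq> 0"
    hence "odd (card ({} :: nat set)) \<longleftrightarrow> m < j" using x unfolding H0_like_def by blast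
    thus False using \<open>m < j\<close> by simp
  qed
  thus ?thesis by (simp add: layer_def)
qed (use x in \<open>auto simp: H0_like_def layer_def\<close>)

lemma Wpart_H0_like:
  assumes "H0_like m n x"
  shows "Wpart m x False = x" and "Wpart m x True = (\<lambda>_ _. 0)"
proof -
  have "x j (\<alpha>, u) = 0" if "odd (card u) \<noteq> (m < j)" for j \<alpha> u
    using assms that unfolding H0_like_def by blast
  thus "Wpart m x False = x" and "Wpart m x True = (\<lambda>_ _. 0)"
    by (auto simp: Wpart_def opart_def fun_eq_iff split: prod.splits)
qed

lemma Wpart_omega_field:
  assumes n: "odd n" and P: "\<forall>j. j \<notin> {1..m} \<longrightarrow> P j = (\<lambda>_. 0)"
  shows "Wpart m (omega_field m n P) True = omega_field m n P"
    and "Wpart m (omega_field m n P) False = (\<lambda>_ _. 0)"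
proof -
  have "Wpart m (omega_field m n P) b j z = (if b then omega_layer m n (P j) z else 0)" for b j z
  proof (cases "j \<in> {1..m}")
    case True thus ?thesis using n by (cases z) (auto simp: Wpart_def opart_def omega_field_def omega_layer_def omega_def)
  next
    case False thus ?thesis by (cases z) (simp add: P Wpart_def opart_def omega_field_def omega_layer_def)
  qed
  thus "Wpart m (omega_field m n P) True = omega_field m n P"
    and "Wpart m (omega_field m n P) False = (\<lambda>_ _. 0)"
    by (simp_all add: fun_eq_iff split_paired_all omega_field_def)
qed

section \<open>Brackets with fields \<open>x\<^sup>\<omega> \<Sum>\<^sub>j P\<^sub>j \<partial>\<^sub>j\<close>\<close>

lemma Wbr_homogeneous:
  assumes "Wpart m D a = D" "Wpart m D (\<not> a) = (\<lambda>_ _. 0)"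
    and "Wpart m E b = E" "Wpart m E (\<not> b) = (\<lambda>_ _. 0)"
  shows "Wbr m n t p D E = brh m n t p a b D E"
proof -
  have "brh m n t p a' b' (\<lambda>_ _. 0) E' = (\<lambda>_ _. 0)" "brh m n t p a' b' D' (\<lambda>_ _. 0) = (\<lambda>_ _. 0)"
    for a' b' and D' E' :: "'a sW"
    by (simp_all add: brh_def Wapp_def)
  thus ?thesis using assms by (cases a; cases b) (simp_all add: Wbr_def UNIV_bool)
qed

lemma sum_split_I0_I1: "sum f {1..m+n} = sum f {1..m} + sum f {m+1..(m+n::nat)}"
proof -
  have "{1..m+n} = {1..m} \<union> {m+1..m+n}" "{1..m} \<inter> {m+1..m+n} = {}" by auto
  thus ?thesis by (metis finite_atLeastAtMost sum.union_disjoint)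
qed

lemma omega_layer_add:
  fixes P Q :: "(nat \<Rightarrow> nat) \<Rightarrow> 'a::monoid_add"
  shows "omega_layer m n P z + omega_layer m n Q z = omega_layer m n (\<lambda>\<gamma>. P \<gamma> + Q \<gamma>) z"
  by (simp add: omega_layer_def split: prod.splits)

lemma omega_layer_diff:
  fixes P Q :: "(nat \<Rightarrow> nat) \<Rightarrow> 'a::group_add"
  shows "omega_layer m n P z - omega_layer m n Q z = omega_layer m n (\<lambda>\<gamma>. P \<gamma> - Q \<gamma>) z"
  by (simp add: omega_layer_def split: prod.splits)

lemma sum_omega_layer:
  fixes R :: "'b \<Rightarrow> (nat \<Rightarrow> nat) \<Rightarrow> 'a::comm_monoid_add"
  shows "(\<Sum>k\<in>K. omega_layer m n (R k) z) = omega_layer m n (\<lambda>\<gamma>. \<Sum>k\<in>K. R k \<gamma>) z"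
  by (simp add: omega_layer_def split: prod.splits)

lemma layer_empty_Wapp:
  assumes x: "H0_like m n x"
  shows "layer {} (Wapp m n t p x h)
    = (\<lambda>\<gamma>. \<Sum>k\<in>{1..m}. dp_mult m t p (layer {} (x k)) (dp_shift m t p k 1 (layer {} h)) \<gamma>)"
proof
  fix \<gamma>
  have "layer {} (Wapp m n t p x h) \<gamma> = Wapp m n t p x h (\<gamma>, {})" by (simp add: layer_def)
  also have "\<dots> = (\<Sum>k\<in>{1..m+n}. dp_mult m t p (layer {} (x k)) (layer {} (oderiv m n t p k h)) \<gamma>)"
    by (simp add: Wapp_def omul_empty_layer)
  also have "\<dots> = (\<Sum>k\<in>{1..m}. dp_mult m t p (layer {} (x k)) (layer {} (oderiv m n t p k h)) \<gamma>)"
    unfolding sum_split_I0_I1 by (simp add: H0_like_layer_empty[OF x])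
  finally show "layer {} (Wapp m n t p x h) \<gamma>
      = (\<Sum>k\<in>{1..m}. dp_mult m t p (layer {} (x k)) (dp_shift m t p k 1 (layer {} h)) \<gamma>)"
    by (simp add: layer_empty_oderiv)
qed

lemma Wapp_omega_field_left:
  assumes P: "\<forall>j. j \<notin> {1..m} \<longrightarrow> P j = (\<lambda>_. 0)"
  shows "Wapp m n t p (omega_field m n P) h
    = omega_layer m n (\<lambda>\<gamma>. \<Sum>k\<in>{1..m}. dp_mult m t p (P k) (dp_shift m t p k 1 (layer {} h)) \<gamma>)"
proof
  fix z
  have "Wapp m n t p (omega_field m n P) h z
      = (\<Sum>k\<in>{1..m+n}. omega_layer m n (dp_mult m t p (P k) (layer {} (oderiv m n t p k h))) z)"
    by (simp add: Wapp_def omega_field_def omul_omega_layer_left)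
  also have "\<dots> = (\<Sum>k\<in>{1..m}. omega_layer m n (dp_mult m t p (P k) (layer {} (oderiv m n t p k h))) z)"
  proof -
    have "(\<Sum>k\<in>{m+1..m+n}. omega_layer m n (dp_mult m t p (P k) (layer {} (oderiv m n t p k h))) z) = 0"
      by (intro sum.neutral ballI) (simp add: P omega_layer_def split: prod.splits)
    thus ?thesis unfolding sum_split_I0_I1 by simp
  qed
  finally show "Wapp m n t p (omega_field m n P) h z
      = omega_layer m n (\<lambda>\<gamma>. \<Sum>k\<in>{1..m}. dp_mult m t p (P k) (dp_shift m t p k 1 (layer {} h)) \<gamma>) z"
    by (simp add: sum_omega_layer layer_empty_oderiv)
qed

lemma Wapp_omega_layer_right:
  assumes y: "H0_like m n y"
  shows "Wapp m n t p y (omega_layer m n Q)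
    = omega_layer m n (\<lambda>\<gamma>. \<Sum>k\<in>{1..m}. dp_mult m t p (layer {} (y k)) (dp_shift m t p k 1 Q) \<gamma>)"
proof
  fix z
  have odd: "\<forall>\<alpha> u. y k (\<alpha>, u) \<noteq> 0 \<longrightarrow> odd (card u)" if "k \<in> {m+1..m+n}" for k
    using y that unfolding H0_like_def by auto
  have "(\<Sum>k\<in>{m+1..m+n}. omul m n t p (y k) (oderiv m n t p k (omega_layer m n Q)) z)
      = omega_layer m n (\<lambda>\<gamma>. \<Sum>k\<in>{m+1..m+n}. dp_mult m t p (layer {k} (y k)) Q \<gamma>) z"
    by (simp add: omul_oderiv_omega_layer_odd[OF _ odd] sum_omega_layer)
  also have "(\<lambda>\<gamma>. \<Sum>k\<in>{m+1..m+n}. dp_mult m t p (layer {k} (y k)) Q \<gamma>)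
      = dp_mult m t p (\<lambda>\<alpha>. \<Sum>k\<in>{m+1..m+n}. y k (\<alpha>, {k})) Q"
    by (rule ext) (simp add: dp_mult_sum_left layer_def)
  also have "(\<lambda>\<alpha>. \<Sum>k\<in>{m+1..m+n}. y k (\<alpha>, {k})) = (\<lambda>_. 0)"
    using y by (simp add: H0_like_def)
  also have "omega_layer m n (dp_mult m t p (\<lambda>_. 0) Q) z = 0"
    by (simp add: omega_layer_def split: prod.splits)
  finally show "Wapp m n t p y (omega_layer m n Q) z
      = omega_layer m n (\<lambda>\<gamma>. \<Sum>k\<in>{1..m}. dp_mult m t p (layer {} (y k)) (dp_shift m t p k 1 Q) \<gamma>) z"
    unfolding Wapp_def sum_split_I0_I1 by (simp add: oderiv_omega_layer omul_omega_layer_right sum_omega_layer)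
qed

text \<open>The bracket of \<open>W(m;\<underline>t)\<close> on coefficient families: the \<open>j\<close>-th coefficient of
  \<open>[\<Sum>\<^sub>k X\<^sub>k \<partial>\<^sub>k, \<Sum>\<^sub>k Y\<^sub>k \<partial>\<^sub>k]\<close>.\<close>

definition witt_bracket :: "nat \<Rightarrow> (nat \<Rightarrow> nat) \<Rightarrow> nat \<Rightarrow> (nat \<Rightarrow> (nat \<Rightarrow> nat) \<Rightarrow> 'a::field)
    \<Rightarrow> (nat \<Rightarrow> (nat \<Rightarrow> nat) \<Rightarrow> 'a) \<Rightarrow> nat \<Rightarrow> (nat \<Rightarrow> nat) \<Rightarrow> 'a" where
  "witt_bracket m t p X Y j = (\<lambda>\<gamma>. (\<Sum>k\<in>{1..m}. dp_mult m t p (X k) (dp_shift m t p k 1 (Y j)) \<gamma>)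
                              - (\<Sum>k\<in>{1..m}. dp_mult m t p (Y k) (dp_shift m t p k 1 (X j)) \<gamma>))"

lemma dp_shift_witt_bracket:
  fixes X Y :: "nat \<Rightarrow> (nat \<Rightarrow> nat) \<Rightarrow> 'a::field"
  assumes ch: "CHAR('a) = p" and pr: "prime p" and i: "i \<in> {1..m}"
  shows "dp_shift m t p i (p ^ e) (witt_bracket m t p X Y j) \<gamma>
    = witt_bracket m t p (\<lambda>k. dp_shift m t p i (p ^ e) (X k)) Y j \<gamma>
      + witt_bracket m t p X (\<lambda>k. dp_shift m t p i (p ^ e) (Y k)) j \<gamma>"
proof -
  let ?S = "dp_shift m t p i (p ^ e)"
  have "?S (witt_bracket m t p X Y j) \<gamma>
      = (\<Sum>k\<in>{1..m}. ?S (dp_mult m t p (X k) (dp_shift m t p k 1 (Y j))) \<gamma>)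
      - (\<Sum>k\<in>{1..m}. ?S (dp_mult m t p (Y k) (dp_shift m t p k 1 (X j))) \<gamma>)"
  proof (cases "\<gamma> \<in> Aset m t p \<and> \<gamma>(i := \<gamma> i + p ^ e) \<in> Aset m t p")
    case False
    thus ?thesis by (simp only: dp_shift_apply witt_bracket_def if_not_P if_False sum.neutral_const diff_self)
  qed (simp add: dp_shift_apply witt_bracket_def)
  also have "\<dots> = witt_bracket m t p (\<lambda>k. ?S (X k)) Y j \<gamma> + witt_bracket m t p X (\<lambda>k. ?S (Y k)) j \<gamma>"
    by (simp add: dp_shift_dp_mult[OF ch pr i] dp_shift_commute[of m t p i _ _ "Suc 0"] witt_bracket_def
        sum.distrib algebra_simps)
  finally show ?thesis .
qed

lemma layer_empty_Wbr_H0_like: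
  assumes x: "H0_like m n x" and y: "H0_like m n y"
  shows "layer {} (Wbr m n t p x y j) = witt_bracket m t p (\<lambda>k. layer {} (x k)) (\<lambda>k. layer {} (y k)) j"
proof
  fix \<gamma>
  have "Wbr m n t p x y = brh m n t p False False x y"
    by (rule Wbr_homogeneous) (simp_all add: Wpart_H0_like[OF x] Wpart_H0_like[OF y])
  hence "layer {} (Wbr m n t p x y j) \<gamma>
      = layer {} (Wapp m n t p x (y j)) \<gamma> - layer {} (Wapp m n t p y (x j)) \<gamma>"
    by (simp add: brh_def layer_def)
  thus "layer {} (Wbr m n t p x y j) \<gamma> = witt_bracket m t p (\<lambda>k. layer {} (x k)) (\<lambda>k. layer {} (y k)) j \<gamma>"
    by (simp add: layer_empty_Wapp[OF x] layer_empty_Wapp[OF y] witt_bracket_def)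
qed

lemma Wbr_omega_field_left:
  assumes n: "odd n" and P: "\<forall>j. j \<notin> {1..m} \<longrightarrow> P j = (\<lambda>_. 0)" and y: "H0_like m n y"
  shows "Wbr m n t p (omega_field m n P) y
    = omega_field m n (witt_bracket m t p P (\<lambda>k. layer {} (y k)))"
proof (intro ext)
  fix j z
  have "Wbr m n t p (omega_field m n P) y = brh m n t p True False (omega_field m n P) y"
    by (rule Wbr_homogeneous)
      (simp_all add: Wpart_omega_field[OF n P] Wpart_H0_like[OF y])
  hence "Wbr m n t p (omega_field m n P) y j z
      = Wapp m n t p (omega_field m n P) (y j) z - Wapp m n t p y (omega_layer m n (P j)) z"
    by (simp add: brh_def omega_field_def)
  also have "\<dots> = omega_layer m n (\<lambda>\<gamma>. \<Sum>k\<in>{1..m}. dp_mult m t p (P k) (dp_shift m t p k 1 (layer {} (y j))) \<gamma>) z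
      - omega_layer m n (\<lambda>\<gamma>. \<Sum>k\<in>{1..m}. dp_mult m t p (layer {} (y k)) (dp_shift m t p k 1 (P j)) \<gamma>) z"
    by (simp add: Wapp_omega_field_left[OF P] Wapp_omega_layer_right[OF y])
  finally show "Wbr m n t p (omega_field m n P) y j z
      = omega_field m n (witt_bracket m t p P (\<lambda>k. layer {} (y k))) j z"
    by (simp add: omega_layer_diff omega_field_def witt_bracket_def)
qed

lemma Wbr_omega_field_right:
  assumes n: "odd n" and P: "\<forall>j. j \<notin> {1..m} \<longrightarrow> P j = (\<lambda>_. 0)" and x: "H0_like m n x"
  shows "Wbr m n t p x (omega_field m n P)
    = omega_field m n (witt_bracket m t p (\<lambda>k. layer {} (x k)) P)"
proof (intro ext)
  fix j z
  have "Wbr m n t p x (omega_field m n P) = brh m n t p False True x (omega_field m n P)"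
    by (rule Wbr_homogeneous)
      (simp_all add: Wpart_omega_field[OF n P] Wpart_H0_like[OF x])
  hence "Wbr m n t p x (omega_field m n P) j z
      = Wapp m n t p x (omega_layer m n (P j)) z - Wapp m n t p (omega_field m n P) (x j) z"
    by (simp add: brh_def omega_field_def)
  also have "\<dots> = omega_layer m n (\<lambda>\<gamma>. \<Sum>k\<in>{1..m}. dp_mult m t p (layer {} (x k)) (dp_shift m t p k 1 (P j)) \<gamma>) z
      - omega_layer m n (\<lambda>\<gamma>. \<Sum>k\<in>{1..m}. dp_mult m t p (P k) (dp_shift m t p k 1 (layer {} (x j))) \<gamma>) z"
    by (simp add: Wapp_omega_field_left[OF P] Wapp_omega_layer_right[OF x])
  finally show "Wbr m n t p x (omega_field m n P) j z
      = omega_field m n (witt_bracket m t p (\<lambda>k. layer {} (x k)) P) j z"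
    by (simp add: omega_layer_diff omega_field_def witt_bracket_def)
qed

section \<open>\<open>\<Theta>\<close> is a homogeneous derivation\<close>

lemma Theta_Wbr:
  fixes x y :: "'a::field sW"
  assumes ch: "CHAR('a) = p" and pr: "prime p" and i: "i \<in> {1..m}" and n: "odd n"
    and x: "H0_like m n x" and y: "H0_like m n y"
  shows "Theta m n t p i q (Wbr m n t p x y)
    = Wadd (Wbr m n t p (Theta m n t p i q x) y) (Wbr m n t p x (Theta m n t p i q y))"
proof -
  let ?S = "dp_shift m t p i (p ^ q)"
  let ?X = "\<lambda>k. layer {} (x k)" and ?Y = "\<lambda>k. layer {} (y k)"
  have p: "0 < p" using prime_gt_0_nat[OF pr] .
  have vanish: "\<forall>j. j \<notin> {1..m} \<longrightarrow> ?S (layer {} (z j)) = (\<lambda>_. 0)" if "H0_like m n z" for z :: "'a sW"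
    by (simp add: H0_like_layer_empty[OF that])
  have "Theta m n t p i q (Wbr m n t p x y) = omega_field m n (\<lambda>j. ?S (witt_bracket m t p ?X ?Y j))"
    by (simp add: Theta_eq_omega_field[OF i p] layer_empty_Wbr_H0_like[OF x y])
  also have "\<dots> = omega_field m n (\<lambda>j \<gamma>. witt_bracket m t p (\<lambda>k. ?S (?X k)) ?Y j \<gamma>
      + witt_bracket m t p ?X (\<lambda>k. ?S (?Y k)) j \<gamma>)"
    by (intro arg_cong[where f = "omega_field m n"] ext dp_shift_witt_bracket[OF ch pr i])
  also have "\<dots> = Wadd (omega_field m n (witt_bracket m t p (\<lambda>k. ?S (?X k)) ?Y))
      (omega_field m n (witt_bracket m t p ?X (\<lambda>k. ?S (?Y k))))"
    by (simp add: Wadd_def omega_field_def omega_layer_add)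
  also have "\<dots> = Wadd (Wbr m n t p (Theta m n t p i q x) y) (Wbr m n t p x (Theta m n t p i q y))"
    by (simp add: Theta_eq_omega_field[OF i p] Wbr_omega_field_left[OF n vanish[OF x] y]
        Wbr_omega_field_right[OF n vanish[OF y] x])
  finally show ?thesis .
qed

lemma omega_field_in_W1:
  assumes n: "odd n" and P: "\<forall>j. j \<notin> {1..m} \<longrightarrow> P j = (\<lambda>_. 0)"
    and P_Aset: "\<forall>j \<gamma>. \<gamma> \<notin> Aset m t p \<longrightarrow> P j \<gamma> = 0"
  shows "omega_field m n P \<in> W1 m n t p"
proof -
  have "omega_field m n P j = (\<lambda>_. 0)" if "j \<notin> {1..m+n}" for j
    using that P by (auto simp: omega_field_def omega_layer_def)
  moreover have "omega_field m n P j z = 0" if "z \<notin> Bas m n t p" for j z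
    using that P_Aset by (cases z) (auto simp: omega_field_def omega_layer_def Bas_iff omega_def)
  ultimately show ?thesis using Wpart_omega_field(1)[OF n P] by (simp add: W1_def Wset_def)
qed

lemma Theta_in_W1:
  assumes i: "i \<in> {1..m}" and p: "0 < p" and n: "odd n" and x: "H0_like m n x"
  shows "Theta m n t p i q x \<in> W1 m n t p"
  unfolding Theta_eq_omega_field[OF i p]
  by (rule omega_field_in_W1[OF n]) (simp_all add: H0_like_layer_empty[OF x] dp_shift_apply)

lemma Whom_Theta:
  assumes i: "i \<in> {1..m}" and p: "0 < p" and x: "Whom m k x"
  shows "Whom m (k + int n - int (p ^ q)) (Theta m n t p i q x)"
  unfolding Whom_def
proof (intro allI impI)
  fix j z assume nz: "Theta m n t p i q x j z \<noteq> 0"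
  obtain \<gamma> w where z: "z = (\<gamma>, w)" by (cases z)
  let ?\<gamma>' = "\<gamma>(i := \<gamma> i + p ^ q)"
  have w: "w = omega m n" and "x j (?\<gamma>', {}) \<noteq> 0"
    using nz by (auto simp: Theta_eq_omega_field[OF i p] z omega_field_def omega_layer_def
        dp_shift_apply layer_def split: if_splits)
  hence "int (zdeg m (?\<gamma>', {})) - 1 = k" using x unfolding Whom_def by blast
  moreover have "(\<Sum>k\<in>{1..m}. ?\<gamma>' k) = (\<Sum>k\<in>{1..m}. \<gamma> k + (if k = i then p ^ q else 0))"
    by (rule sum.cong) auto
  hence "zdeg m (?\<gamma>', {}) = (\<Sum>k\<in>{1..m}. \<gamma> k) + p ^ q"
    using i by (simp add: zdeg_def sum.distrib)
  moreover have "zdeg m z = (\<Sum>k\<in>{1..m}. \<gamma> k) + n" by (simp add: zdeg_def z w omega_def)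
  ultimately show "int (zdeg m z) - 1 = k + int n - int (p ^ q)" by simp
qed

theorem lemma4p2:
  fixes m n p i q :: nat and t :: "nat \<Rightarrow> nat"
  assumes char: "CHAR('a::field) = p" and pprime: "prime p" and p3: "p > 3"
    and algclosed: "\<forall>P :: 'a poly. degree P \<noteq> 0 \<longrightarrow> (\<exists>z. poly P z = 0)"
    and m_pos: "m > 0" and m_even: "even m" and n_odd: "odd n"
    and t_pos: "\<forall>k\<in>{1..m}. t k > 0"
    and i_in: "i \<in> {1..m}" and q_pos: "q > 0"
  shows "(\<forall>x\<in>(H0 m n t p :: 'a sW set). Theta m n t p i q x \<in> W1 m n t p)
    \<and> (\<forall>x\<in>(H0 m n t p :: 'a sW set). \<forall>y\<in>H0 m n t p.
          Theta m n t p i q (Wbr m n t p x y)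
            = Wadd (Wbr m n t p (Theta m n t p i q x) y) (Wbr m n t p x (Theta m n t p i q y)))
    \<and> (\<forall>k. \<forall>x\<in>(H0 m n t p :: 'a sW set). Whom m k x
          \<longrightarrow> Whom m (k + int n - int (p ^ q)) (Theta m n t p i q x))"
proof -
  have p: "0 < p" using p3 by simp
  have H0: "H0_like m n x" if "x \<in> (H0 m n t p :: 'a sW set)" for x
    by (rule H0_like_H0[OF m_even n_odd that])
  show ?thesis
    using Theta_in_W1[OF i_in p n_odd H0] Theta_Wbr[OF char pprime i_in n_odd H0 H0]
      Whom_Theta[OF i_in p] by blast
qed

end
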